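(* Let $\mathbf{W}=(\mathbf{w}_j)_{j\ge1}$ be DSB weights with parameters $(\beta,\theta)$, $\beta,\theta>0$, and let $(\mathbf{d}_i)_{i\ge1}$ be conditionally i.i.d. given $\mathbf{W}$ with $\mathbb{P}[\mathbf{d}_i=j\mid\mathbf{W}]=\mathbf{w}_j$. Then for any positive integers $d_1,\dots,d_n$, $$\mathbb{P}[\mathbf{d}_1=d_1,\dots,\mathbf{d}_n=d_n]=\sum_{\{A_1,\dots,A_m\}}\frac{(\beta\theta)^m}{(\beta)_k}\prod_{j=1}^m\frac{(|A_j|-1)!\,\big(\sum_{i\in A_j}r_i\big)!}{\big(\theta+\sum_{i\in A_j}t_i\big)_{1+\sum_{i\in A_j}r_i}},$$ where $r_i=\sum_{l=1}^n\mathbf{1}_{\{d_l=i\}}$, $t_i=\sum_{l=1}^n\mathbf{1}_{\{d_l>i\}}$, $(x)_m=\prod_{i=0}^{m-1}(x+i)$, and the sum ranges over all partitions $\{A_1,\dots,A_m\}$ of $\{1,\dots,k\}$ with $k=\max\{d_1,\dots,d_n\}$.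
   Context: DSB weights with parameters $(\beta,\theta)$: $\mathbf{w}_1=\mathbf{v}_1$, $\mathbf{w}_j=\mathbf{v}_j\prod_{i<j}(1-\mathbf{v}_i)$, where $(\mathbf{v}_i)_{i\ge1}$ are conditionally i.i.d. given $\boldsymbol{\nu}$ with law $\boldsymbol{\nu}$, and $\boldsymbol{\nu}$ is a Dirichlet process on $[0,1]$ with total mass parameter $\beta$ and base measure $\mathrm{Be}(1,\theta)$. *)

theory Defs
  imports "HOL-Probability.Probability" "HOL-Library.Disjoint_Sets"
begin

definition beta_one :: "real \<Rightarrow> real measure" where
  "beta_one \<theta> = density lborel
     (\<lambda>x. ennreal (indicator {0<..<1} x * \<theta> * (1 - x) powr (\<theta> - 1)))"

text \<open>Dirichlet density on the coordinates in S minus the distinguished last index m.\<close>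
definition dirichlet_density :: "(nat \<Rightarrow> real) \<Rightarrow> nat set \<Rightarrow> nat \<Rightarrow> (nat \<Rightarrow> real) \<Rightarrow> real" where
  "dirichlet_density \<alpha> S m x =
     (if (\<forall>i\<in>S - {m}. 0 < x i) \<and> (\<Sum>i\<in>S - {m}. x i) < 1 then
        Gamma (\<Sum>i\<in>S. \<alpha> i) / (\<Prod>i\<in>S. Gamma (\<alpha> i))
        * (\<Prod>i\<in>S - {m}. x i powr (\<alpha> i - 1))
        * (1 - (\<Sum>i\<in>S - {m}. x i)) powr (\<alpha> m - 1)
      else 0)"

text \<open>The random vector (X 0, ..., X (k-1)) on M has the Dirichlet(alpha 0, ..., alpha (k-1))
  distribution (alpha i >= 0, with the standard convention that coordinates with
  alpha i = 0 vanish almost surely, the remaining ones being Dirichlet distributed).\<close>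
definition has_dirichlet :: "'w measure \<Rightarrow> ('w \<Rightarrow> nat \<Rightarrow> real) \<Rightarrow> nat \<Rightarrow> (nat \<Rightarrow> real) \<Rightarrow> bool" where
  "has_dirichlet M X k \<alpha> =
     (let S = {i\<in>{..<k}. 0 < \<alpha> i}; m = Max S; T = S - {m} in
       S \<noteq> {} \<and> (\<forall>i<k. 0 \<le> \<alpha> i) \<and>
       (\<forall>i\<in>{..<k} - S. AE \<omega> in M. X \<omega> i = 0) \<and>
       distr M (Pi\<^sub>M T (\<lambda>_. lborel)) (\<lambda>\<omega>. restrict (X \<omega>) T)
         = density (Pi\<^sub>M T (\<lambda>_. lborel)) (\<lambda>x. ennreal (dirichlet_density \<alpha> S m x)) \<and>
       (AE \<omega> in M. X \<omega> m = 1 - (\<Sum>i\<in>T. X \<omega> i)))"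

text \<open>Ferguson's definition: nu is a Dirichlet process on [0,1] with total mass beta
  and base probability measure mu.\<close>
definition dirichlet_process :: "'w measure \<Rightarrow> ('w \<Rightarrow> real measure) \<Rightarrow> real \<Rightarrow> real measure \<Rightarrow> bool" where
  "dirichlet_process M \<nu> \<beta> \<mu> =
     (\<nu> \<in> measurable M (prob_algebra borel) \<and>
      (\<forall>k>0. \<forall>B :: nat \<Rightarrow> real set.
         (\<forall>i<k. B i \<in> sets borel) \<and> disjoint_family_on B {..<k} \<and> (\<Union>i<k. B i) = {0..1}
         \<longrightarrow> has_dirichlet M (\<lambda>\<omega> i. measure (\<nu> \<omega>) (B i)) k (\<lambda>i. \<beta> * measure \<mu> (B i))))"

definition dsb_weight :: "(nat \<Rightarrow> real) \<Rightarrow> nat \<Rightarrow> real" where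
  "dsb_weight v j = (if j = 0 then 0 else v j * (\<Prod>i\<in>{1..<j}. (1 - v i)))"

end

theory Submission
  imports Defs
begin

(* Given the weights, the allocations are i.i.d., and by stick-breaking the event
   d_l = dd l (l = 1..n) has conditional probability prod_{j<=k} v_j^(r_j) (1 - v_j)^(t_j).
   So the claim is a formula for the mixed moments of the sticks v_1, ..., v_k.

   Given nu the sticks are i.i.d. with law nu, hence P(v_j in B_j, j <= k) = E prod_j nu(B_j).
   Refining the B_j to the atoms of the algebra they generate turns the nu-masses into a
   Dirichlet vector, whose moments obey the Polya urn recursion; its solution is the
   Blackwell-MacQueen formula
     (beta)_k E prod_j nu(B_j) = sum over partitions P of {1..k} of
                                 prod_{A in P} (|A|-1)! beta mu(inter_{j in A} B_j).
   Hence (v_1, ..., v_k) has the law of the following mixture: choose a partition of {1..k}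
   with Ewens weights and give all indices of a block one common Beta(1,theta) value,
   independently across blocks. Integrating the monomial block by block leaves the Beta
   integrals theta R! / (theta + T)_(R+1). *)

section \<open>Sums over set partitions\<close>

definition partition_remove :: "'a \<Rightarrow> 'a set set \<Rightarrow> 'a set set" where
  "partition_remove x Q = (\<lambda>A. A - {x}) ` Q - {{}}"

lemma partition_on_partition_remove:
  assumes "partition_on (insert x I) Q" "x \<notin> I"
  shows "partition_on I (partition_remove x Q)"
proof -
  have "partition_on ((\<lambda>A. A - {x}) (insert x I)) ((\<lambda>A. A - {x}) ` Q - {{}})"
    by (rule partition_on_transform[OF assms(1)]) (auto simp: disjnt_def)
  thus ?thesis using assms(2) by (simp add: partition_remove_def)
qed

lemma partition_remove_eq:
  assumes "partition_on J Q" "B \<in> Q" "x \<in> B"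
  shows "partition_remove x Q = (Q - {B}) \<union> ({B - {x}} - {{}})"
proof -
  have disj: "A \<inter> B = {}" if "A \<in> Q" "A \<noteq> B" for A
    using assms that partition_onD2[OF assms(1)] by (auto simp: disjoint_def)
  then have "A - {x} = A" if "A \<in> Q" "A \<noteq> B" for A
    using that assms(3) by blast
  then show ?thesis
    using partition_onD3[OF assms(1)] assms(2)
    unfolding partition_remove_def by (auto simp: image_iff) (metis Diff_empty)+
qed

lemma partition_on_insert_singleton:
  assumes "x \<notin> I" "partition_on I P"
  shows "partition_on (insert x I) (insert {x} P)" "partition_remove x (insert {x} P) = P"
proof -
  have "disjnt {x} (\<Union>P)" using partition_onD1[OF assms(2)] assms(1) by (auto simp: disjnt_def)
  then show part: "partition_on (insert x I) (insert {x} P)"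
    by (subst partition_on_insert) (use assms in auto)
  have "x \<notin> A" if "A \<in> P" for A using that partition_onD1[OF assms(2)] assms(1) by auto
  then show "partition_remove x (insert {x} P) = P"
    using partition_remove_eq[OF part, of "{x}"] by auto
qed

lemma partition_on_insert_into_block:
  assumes "x \<notin> I" "partition_on I P" "A \<in> P"
  shows "partition_on (insert x I) (insert (insert x A) (P - {A}))"
    "partition_remove x (insert (insert x A) (P - {A})) = P"
proof -
  have UP: "\<Union>P = I" using partition_onD1[OF assms(2)] by simp
  have xnA: "x \<notin> A'" if "A' \<in> P" for A' using that UP assms(1) by auto
  have disj: "A' \<inter> A = {}" if "A' \<in> P" "A' \<noteq> A" for A'
    using assms(3) that partition_onD2[OF assms(2)] by (auto simp: disjoint_def)
  have "disjnt A (\<Union>(P - {A}))" using disj by (auto simp: disjnt_def)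
  hence rest: "partition_on (I - A) (P - {A})"
    using assms(2,3) partition_on_insert[of A "P - {A}" I] by (simp add: insert_absorb)
  have "disjnt (insert x A) (\<Union>(P - {A}))" using disj xnA UP assms(1) by (auto simp: disjnt_def)
  moreover have "insert x I - insert x A = I - A" using assms(1) by auto
  ultimately show part: "partition_on (insert x I) (insert (insert x A) (P - {A}))"
    by (subst partition_on_insert) (use rest assms(3) UP in auto)
  have "partition_remove x (insert (insert x A) (P - {A}))
      = (insert (insert x A) (P - {A}) - {insert x A}) \<union> ({insert x A - {x}} - {{}})"
    by (rule partition_remove_eq[OF part]) auto
  also have "\<dots> = P"
    using assms(3) xnA[OF assms(3)] xnA[of "insert x A"] partition_onD3[OF assms(2)] by auto
  finally show "partition_remove x (insert (insert x A) (P - {A})) = P" .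
qed

lemma partitions_with_partition_remove:
  assumes "x \<notin> I" "partition_on I P"
  shows "{Q. partition_on (insert x I) Q \<and> partition_remove x Q = P}
       = insert (insert {x} P) ((\<lambda>A. insert (insert x A) (P - {A})) ` P)"
proof (intro equalityI subsetI)
  fix Q assume "Q \<in> {Q. partition_on (insert x I) Q \<and> partition_remove x Q = P}"
  hence Q: "partition_on (insert x I) Q" "partition_remove x Q = P" by auto
  from partition_onD1[OF Q(1)] obtain B where B: "B \<in> Q" "x \<in> B" by auto
  have disj: "A \<inter> B = {}" if "A \<in> Q" "A \<noteq> B" for A
    using B that partition_onD2[OF Q(1)] by (auto simp: disjoint_def)
  have P: "P = (Q - {B}) \<union> ({B - {x}} - {{}})"
    using partition_remove_eq[OF Q(1) B] Q(2) by simp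
  show "Q \<in> insert (insert {x} P) ((\<lambda>A. insert (insert x A) (P - {A})) ` P)"
  proof (cases "B = {x}")
    case True
    hence "Q = insert {x} P" using P B by auto
    thus ?thesis by simp
  next
    case False
    define A where "A = B - {x}"
    have "A \<noteq> {}" using False B by (auto simp: A_def)
    moreover have "A \<notin> Q - {B}"
      using disj[of A] \<open>A \<noteq> {}\<close> by (auto simp: A_def)
    ultimately have "A \<in> P" "P - {A} = Q - {B}" using P by (auto simp: A_def)
    moreover have "insert x A = B" using B by (auto simp: A_def)
    ultimately show ?thesis using B by (auto intro!: image_eqI[of _ _ A])
  qed
qed (use partition_on_insert_singleton[OF assms] partition_on_insert_into_block[OF assms] in auto)

lemma sum_partitions_insert:
  fixes F :: "'a set set \<Rightarrow> 'b::comm_monoid_add"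
  assumes "finite I" "x \<notin> I"
  shows "(\<Sum>Q\<in>{Q. partition_on (insert x I) Q}. F Q)
       = (\<Sum>P\<in>{P. partition_on I P}. F (insert {x} P) + (\<Sum>A\<in>P. F (insert (insert x A) (P - {A}))))"
proof -
  have "(\<Sum>Q\<in>{Q. partition_on (insert x I) Q}. F Q)
     = (\<Sum>P\<in>{P. partition_on I P}. \<Sum>Q\<in>{Q. partition_on (insert x I) Q \<and> partition_remove x Q = P}. F Q)"
    by (subst sum.group[symmetric, where g = "partition_remove x"])
      (use assms partition_on_partition_remove in \<open>auto simp: finitely_many_partition_on intro!: sum.cong\<close>)
  also have "\<dots> = (\<Sum>P\<in>{P. partition_on I P}. F (insert {x} P) + (\<Sum>A\<in>P. F (insert (insert x A) (P - {A}))))"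
  proof (rule sum.cong[OF refl])
    fix P assume "P \<in> {P. partition_on I P}"
    hence P: "partition_on I P" by simp
    have xnA: "x \<notin> A" if "A \<in> P" for A using that partition_onD1[OF P] assms(2) by auto
    have "insert {x} P \<notin> (\<lambda>A. insert (insert x A) (P - {A})) ` P"
    proof
      assume "insert {x} P \<in> (\<lambda>A. insert (insert x A) (P - {A})) ` P"
      then obtain A where A: "A \<in> P" "{x} \<in> insert (insert x A) (P - {A})" by auto
      moreover have "A \<noteq> {}" using A(1) partition_onD3[OF P] by auto
      ultimately show False using xnA by auto
    qed
    moreover have "inj_on (\<lambda>A. insert (insert x A) (P - {A})) P"
    proof (rule inj_onI)
      fix A B assume AB: "A \<in> P" "B \<in> P" "insert (insert x A) (P - {A}) = insert (insert x B) (P - {B})"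
      hence "insert x A = insert x B" using xnA by blast
      thus "A = B" using xnA AB by (metis insert_ident)
    qed
    ultimately show "(\<Sum>Q\<in>{Q. partition_on (insert x I) Q \<and> partition_remove x Q = P}. F Q)
        = F (insert {x} P) + (\<Sum>A\<in>P. F (insert (insert x A) (P - {A})))"
      unfolding partitions_with_partition_remove[OF assms(2) P]
      using finite_elements[OF assms(1) P] by (simp add: sum.reindex)
  qed
  finally show ?thesis .
qed

text \<open>With \<open>h A = \<beta> * \<mu> (\<Inter>j\<in>A. B j)\<close>, \<open>ewens_sum h I / pochhammer \<beta> (card I)\<close> is the
  moment \<open>E (\<Prod>j\<in>I. \<nu> (B j))\<close> of a Dirichlet process \<open>\<nu>\<close> with total mass \<open>\<beta>\<close> and base
  measure \<open>\<mu>\<close>.\<close>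
definition ewens_sum :: "('a set \<Rightarrow> real) \<Rightarrow> 'a set \<Rightarrow> real" where
  "ewens_sum h I = (\<Sum>P\<in>{P. partition_on I P}. \<Prod>A\<in>P. fact (card A - 1) * h A)"

lemma ewens_sum_empty [simp]: "ewens_sum h {} = 1"
  by (simp add: ewens_sum_def partition_on_empty)

lemma sum_prod_blocks_insert_into_block:
  fixes h :: "'a set \<Rightarrow> real"
  assumes "finite I" "x \<notin> I" "partition_on I P"
  shows "(\<Sum>A\<in>P. \<Prod>B\<in>insert (insert x A) (P - {A}). fact (card B - 1) * h B)
       = (\<Sum>j\<in>I. \<Prod>A\<in>P. fact (card A - 1) * (if j \<in> A then h (insert x A) else h A))"
proof -
  let ?c = "\<lambda>A. fact (card A - 1) * h A :: real"
  have finP: "finite P" using finite_elements[OF assms(1,3)] .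
  have UP: "\<Union>P = I" using partition_onD1[OF assms(3)] by simp
  have xnA: "x \<notin> A" if "A \<in> P" for A using that UP assms(2) by auto
  have finA: "finite A" if "A \<in> P" for A using that UP assms(1) by (metis Union_upper finite_subset)
  have disj: "A \<inter> B = {}" if "A \<in> P" "B \<in> P" "A \<noteq> B" for A B
    using that partition_onD2[OF assms(3)] by (auto simp: disjoint_def)
  \<comment> \<open>adding \<open>x\<close> to \<open>A\<close> multiplies its weight by \<open>card A\<close>: one term for each \<open>j \<in> A\<close>\<close>
  have grow: "(\<Prod>B\<in>insert (insert x A) (P - {A}). ?c B)
      = (\<Sum>j\<in>A. fact (card A - 1) * h (insert x A) * (\<Prod>B\<in>P - {A}. ?c B))" if A: "A \<in> P" for A
  proof -
    have "card A > 0" using A partition_onD3[OF assms(3)] finA[OF A] card_gt_0_iff by blast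
    hence "(fact (card A) :: real) = of_nat (card A) * fact (card A - 1)" by (rule fact_reduce)
    moreover have "insert x A \<notin> P - {A}" "card (insert x A) - 1 = card A"
      using xnA[OF A] finA[OF A] xnA by auto
    ultimately show ?thesis using finP by (simp add: mult_ac)
  qed
  have "(\<Sum>A\<in>P. \<Prod>B\<in>insert (insert x A) (P - {A}). ?c B)
      = (\<Sum>A\<in>P. \<Sum>j\<in>A. fact (card A - 1) * h (insert x A) * (\<Prod>B\<in>P - {A}. ?c B))"
    using grow by (rule sum.cong[OF refl])
  also have "(\<Sum>A\<in>P. \<Sum>j\<in>A. fact (card A - 1) * h (insert x A) * (\<Prod>B\<in>P - {A}. ?c B))
      = (\<Sum>A\<in>P. \<Sum>j\<in>A. \<Prod>B\<in>P. fact (card B - 1) * (if j \<in> B then h (insert x B) else h B))"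
  proof (intro sum.cong refl)
    fix A j assume A: "A \<in> P" and j: "j \<in> A"
    have "(\<Prod>B\<in>P - {A}. fact (card B - 1) * (if j \<in> B then h (insert x B) else h B)) = (\<Prod>B\<in>P - {A}. ?c B)"
      using disj A j by (intro prod.cong) auto
    thus "fact (card A - 1) * h (insert x A) * (\<Prod>B\<in>P - {A}. ?c B)
        = (\<Prod>B\<in>P. fact (card B - 1) * (if j \<in> B then h (insert x B) else h B))"
      using A j finP by (simp add: prod.remove[of _ A])
  qed
  also have "\<dots> = (\<Sum>j\<in>I. \<Prod>A\<in>P. fact (card A - 1) * (if j \<in> A then h (insert x A) else h A))"
    unfolding UP[symmetric] by (rule sum.Union_disjoint[unfolded o_def, symmetric]) (use finA disj in blast)+
  finally show ?thesis .
qed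

lemma ewens_sum_insert:
  assumes "finite I" "x \<notin> I"
  shows "ewens_sum h (insert x I) = h {x} * ewens_sum h I
     + (\<Sum>j\<in>I. ewens_sum (\<lambda>A. if j \<in> A then h (insert x A) else h A) I)"
proof -
  let ?c = "\<lambda>A. fact (card A - 1) * h A :: real"
  have "ewens_sum h (insert x I) = (\<Sum>P\<in>{P. partition_on I P}. (\<Prod>A\<in>insert {x} P. ?c A)
          + (\<Sum>A\<in>P. \<Prod>B\<in>insert (insert x A) (P - {A}). ?c B))"
    unfolding ewens_sum_def by (rule sum_partitions_insert[OF assms])
  also have "\<dots> = (\<Sum>P\<in>{P. partition_on I P}. h {x} * (\<Prod>A\<in>P. ?c A)
          + (\<Sum>j\<in>I. \<Prod>A\<in>P. fact (card A - 1) * (if j \<in> A then h (insert x A) else h A)))"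
  proof (rule sum.cong[OF refl])
    fix P assume "P \<in> {P. partition_on I P}"
    hence P: "partition_on I P" by simp
    have "x \<notin> A" if "A \<in> P" for A using that partition_onD1[OF P] assms(2) by auto
    hence "(\<Prod>A\<in>insert {x} P. ?c A) = h {x} * (\<Prod>A\<in>P. ?c A)"
      using finite_elements[OF assms(1) P] by (subst prod.insert) auto
    thus "(\<Prod>A\<in>insert {x} P. ?c A) + (\<Sum>A\<in>P. \<Prod>B\<in>insert (insert x A) (P - {A}). ?c B)
        = h {x} * (\<Prod>A\<in>P. ?c A) + (\<Sum>j\<in>I. \<Prod>A\<in>P. fact (card A - 1) * (if j \<in> A then h (insert x A) else h A))"
      by (simp only: sum_prod_blocks_insert_into_block[OF assms P])
  qed
  also have "\<dots> = h {x} * ewens_sum h I + (\<Sum>j\<in>I. ewens_sum (\<lambda>A. if j \<in> A then h (insert x A) else h A) I)"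
    unfolding ewens_sum_def sum.distrib sum_distrib_left by (simp add: sum.swap[of _ I])
  finally show ?thesis .
qed

definition ewens_weight :: "real \<Rightarrow> 'i set \<Rightarrow> 'i set set \<Rightarrow> real" where
  "ewens_weight \<beta> K P = (\<Prod>A\<in>P. fact (card A - 1) * \<beta>) / pochhammer \<beta> (card K)"

lemma ewens_weight_nonneg: "\<beta> > 0 \<Longrightarrow> ewens_weight \<beta> K P \<ge> 0"
  unfolding ewens_weight_def by (intro divide_nonneg_nonneg prod_nonneg mult_nonneg_nonneg)
    (auto intro: less_imp_le pochhammer_pos)

lemma ewens_sum_divide:
  "ewens_sum (\<lambda>A. \<beta> * g A) K / pochhammer \<beta> (card K)
     = (\<Sum>P | partition_on K P. ewens_weight \<beta> K P * (\<Prod>A\<in>P. g A))"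
  unfolding ewens_sum_def ewens_weight_def sum_divide_distrib
  by (intro sum.cong refl) (simp add: prod.distrib mult_ac)

lemma ewens_weight_mult_prod:
  "ewens_weight \<beta> K P * (\<Prod>A\<in>P. \<theta> * g A)
     = (\<beta> * \<theta>) ^ card P / pochhammer \<beta> (card K) * (\<Prod>A\<in>P. fact (card A - 1) * g A)"
  by (simp add: ewens_weight_def prod.distrib power_mult_distrib mult_ac)

section \<open>Beta and Dirichlet integrals\<close>

lemma nn_integral_beta_kernel_scaled:
  fixes a b c :: real
  assumes a: "a > 0" and b: "b > 0" and c: "c > 0"
  shows "(\<integral>\<^sup>+y. ennreal (indicator {0<..<c} y * y powr (a - 1) * (c - y) powr (b - 1)) \<partial>lborel)
       = ennreal (c powr (a + b - 1) * Beta a b)"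
proof -
  have hi: "((\<lambda>t. t powr (a - 1) * (1 - t) powr (b - 1)) has_integral Beta a b) {0<..<1}"
    using has_integral_Beta_real[OF a b] by (simp add: has_integral_Icc_iff_Ioo)
  have B: "(\<integral>\<^sup>+t. ennreal (indicator {0<..<1} t * (t powr (a - 1) * (1 - t) powr (b - 1))) \<partial>lborel) = ennreal (Beta a b)"
    by (rule nn_integral_has_integral_lebesgue[OF _ hi]) auto
  have "(\<integral>\<^sup>+y. ennreal (indicator {0<..<c} y * y powr (a - 1) * (c - y) powr (b - 1)) \<partial>lborel)
     = ennreal \<bar>c\<bar> * (\<integral>\<^sup>+x. ennreal (indicator {0<..<c} (0 + c * x) * (0 + c * x) powr (a - 1) * (c - (0 + c * x)) powr (b - 1)) \<partial>lborel)"
    by (rule nn_integral_real_affine) (use c in auto)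
  also have "(\<lambda>x. ennreal (indicator {0<..<c} (0 + c * x) * (0 + c * x) powr (a - 1) * (c - (0 + c * x)) powr (b - 1)))
      = (\<lambda>x. ennreal (c powr (a + b - 2)) * ennreal (indicator {0<..<1} x * (x powr (a - 1) * (1 - x) powr (b - 1))))"
  proof
    fix x :: real
    show "ennreal (indicator {0<..<c} (0 + c * x) * (0 + c * x) powr (a - 1) * (c - (0 + c * x)) powr (b - 1))
        = ennreal (c powr (a + b - 2)) * ennreal (indicator {0<..<1} x * (x powr (a - 1) * (1 - x) powr (b - 1)))"
    proof (cases "0 < x \<and> x < 1")
      case True
      have cx: "c - c * x = c * (1 - x)" by (simp add: algebra_simps)
      have "(c * x) powr (a - 1) * (c * (1 - x)) powr (b - 1) = c powr (a + b - 2) * (x powr (a - 1) * (1 - x) powr (b - 1))"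
        using True c by (simp add: powr_mult powr_add[symmetric] mult_ac)
      moreover have "0 < c * x" "c * x < c" using True c by auto
      ultimately show ?thesis using True c
        by (simp add: indicator_def cx ennreal_mult'[symmetric])
    next
      case False
      hence "\<not> (0 < c * x \<and> c * x < c)" using c
        by (auto simp: mult_less_cancel_left2 zero_less_mult_iff)
      thus ?thesis using False by (auto simp: indicator_def)
    qed
  qed
  also have "ennreal \<bar>c\<bar> * (\<integral>\<^sup>+x. ennreal (c powr (a + b - 2)) * ennreal (indicator {0<..<1} x * (x powr (a - 1) * (1 - x) powr (b - 1))) \<partial>lborel)
      = ennreal c * (ennreal (c powr (a + b - 2)) * ennreal (Beta a b))"
    using c by (subst nn_integral_cmult) (auto simp: B)
  also have "\<dots> = ennreal (c powr (a + b - 1) * Beta a b)"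
  proof -
    have "c * c powr (a + b - 2) = c powr (a + b - 1)"
      using c by (simp add: powr_add[symmetric] powr_mult_base)
    moreover have "Beta a b \<ge> 0" using a b by (simp add: Beta_def Gamma_real_pos less_imp_le)
    ultimately show ?thesis using c
      by (simp add: ennreal_mult'[symmetric] ennreal_mult[symmetric] mult.assoc[symmetric])
  qed
  finally show ?thesis .
qed

definition simplex_density :: "nat set \<Rightarrow> (nat \<Rightarrow> real) \<Rightarrow> real \<Rightarrow> (nat \<Rightarrow> real) \<Rightarrow> real" where
  "simplex_density T a b x = (if (\<forall>i\<in>T. 0 < x i) \<and> (\<Sum>i\<in>T. x i) < 1
     then (\<Prod>i\<in>T. x i powr (a i - 1)) * (1 - (\<Sum>i\<in>T. x i)) powr (b - 1) else 0)"

lemma simplex_density_nonneg: "simplex_density T a b x \<ge> 0"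
  unfolding simplex_density_def by (auto intro!: prod_nonneg mult_nonneg_nonneg)

lemma simplex_density_measurable [measurable]:
  "finite T \<Longrightarrow> simplex_density T a b \<in> borel_measurable (Pi\<^sub>M T (\<lambda>_. lborel))"
  unfolding simplex_density_def by measurable

lemma nn_integral_simplex_density_insert:
  assumes "finite T" "i \<notin> T" "0 < a i" "0 < b"
  shows "(\<integral>\<^sup>+y. ennreal (simplex_density (insert i T) a b (x(i := y))) \<partial>lborel)
       = ennreal (simplex_density T a (a i + b) x * Beta (a i) b)"
proof -
  define \<sigma> where "\<sigma> = (\<Sum>j\<in>T. x j)"
  define p where "p = (\<Prod>j\<in>T. x j powr (a j - 1))"
  have sum_upd: "(\<Sum>j\<in>T. (x(i := y)) j) = \<sigma>" for y
    unfolding \<sigma>_def using assms(2) by (intro sum.cong) auto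
  have prod_upd: "(\<Prod>j\<in>T. (x(i := y)) j powr (a j - 1)) = p" for y
    unfolding p_def using assms(2) by (intro prod.cong) auto
  have eq: "simplex_density (insert i T) a b (x(i := y)) =
     (if (\<forall>j\<in>T. 0 < x j) then indicator {0<..<1 - \<sigma>} y * p * (y powr (a i - 1) * ((1 - \<sigma>) - y) powr (b - 1)) else 0)" for y
  proof -
    have "(\<forall>j\<in>insert i T. 0 < (x(i := y)) j) \<longleftrightarrow> 0 < y \<and> (\<forall>j\<in>T. 0 < x j)"
      using assms(2) by auto
    moreover have "(\<Sum>j\<in>insert i T. (x(i := y)) j) = y + \<sigma>"
      using assms(1,2) sum_upd[of y] by (simp del: fun_upd_apply) simp
    moreover have "(\<Prod>j\<in>insert i T. (x(i := y)) j powr (a j - 1)) = y powr (a i - 1) * p"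
      using assms(1,2) prod_upd[of y] by (simp del: fun_upd_apply) simp
    ultimately show ?thesis unfolding simplex_density_def
      by (auto simp: indicator_def algebra_simps)
  qed
  show ?thesis
  proof (cases "(\<forall>j\<in>T. 0 < x j) \<and> \<sigma> < 1")
    case True
    have p0: "p \<ge> 0" unfolding p_def by (auto intro!: prod_nonneg)
    have "(\<integral>\<^sup>+y. ennreal (simplex_density (insert i T) a b (x(i := y))) \<partial>lborel)
        = (\<integral>\<^sup>+y. ennreal p * ennreal (indicator {0<..<1 - \<sigma>} y * y powr (a i - 1) * ((1 - \<sigma>) - y) powr (b - 1)) \<partial>lborel)"
      unfolding eq using True p0 by (intro nn_integral_cong) (auto simp: ennreal_mult'[symmetric] mult_ac)
    also have "\<dots> = ennreal p * ennreal ((1 - \<sigma>) powr (a i + b - 1) * Beta (a i) b)"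
      using True assms by (subst nn_integral_cmult) (auto simp: nn_integral_beta_kernel_scaled)
    also have "\<dots> = ennreal (simplex_density T a (a i + b) x * Beta (a i) b)"
      using True p0 by (simp add: simplex_density_def p_def \<sigma>_def ennreal_mult'[symmetric] mult_ac)
    finally show ?thesis .
  next
    case False
    have "(\<integral>\<^sup>+y. ennreal (simplex_density (insert i T) a b (x(i := y))) \<partial>lborel) = (\<integral>\<^sup>+y. 0 \<partial>(lborel::real measure))"
      unfolding eq using False by (intro nn_integral_cong) (auto simp: indicator_def)
    moreover have "simplex_density T a (a i + b) x = 0" using False unfolding simplex_density_def \<sigma>_def by auto
    ultimately show ?thesis by (simp del: fun_upd_apply)
  qed
qed

lemma nn_integral_simplex_density:
  assumes "finite T" "\<forall>i\<in>T. 0 < a i" "0 < b"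
  shows "(\<integral>\<^sup>+x. ennreal (simplex_density T a b x) \<partial>Pi\<^sub>M T (\<lambda>_. lborel))
       = ennreal ((\<Prod>i\<in>T. Gamma (a i)) * Gamma b / Gamma (sum a T + b))"
  using assms
proof (induction T arbitrary: b rule: finite_induct)
  case empty
  have "Gamma b \<noteq> 0" using empty.prems Gamma_real_pos[of b] by (simp del: Gamma_real_pos)
  thus ?case by (simp add: PiM_empty simplex_density_def)
next
  case (insert i T)
  interpret product_sigma_finite "\<lambda>_. lborel" by standard
  have ai: "0 < a i" using insert.prems by auto
  have "(\<integral>\<^sup>+x. ennreal (simplex_density (insert i T) a b x) \<partial>Pi\<^sub>M (insert i T) (\<lambda>_. lborel))
      = (\<integral>\<^sup>+x. (\<integral>\<^sup>+y. ennreal (simplex_density (insert i T) a b (x(i := y))) \<partial>lborel) \<partial>Pi\<^sub>M T (\<lambda>_. lborel))"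
    by (rule product_nn_integral_insert) (use insert.hyps in auto)
  also have "\<dots> = (\<integral>\<^sup>+x. ennreal (simplex_density T a (a i + b) x) * ennreal (Beta (a i) b) \<partial>Pi\<^sub>M T (\<lambda>_. lborel))"
  proof -
    have "Beta (a i) b \<ge> 0" using ai insert.prems by (simp add: Beta_def Gamma_real_pos less_imp_le)
    moreover note nn_integral_simplex_density_insert[of T i a b, OF insert.hyps ai insert.prems(2)]
    ultimately show ?thesis by (simp add: ennreal_mult simplex_density_nonneg)
  qed
  also have "\<dots> = ennreal ((\<Prod>j\<in>T. Gamma (a j)) * Gamma (a i + b) / Gamma (sum a T + (a i + b))) * ennreal (Beta (a i) b)"
    using insert ai by (subst nn_integral_multc) auto
  also have "\<dots> = ennreal ((\<Prod>j\<in>insert i T. Gamma (a j)) * Gamma b / Gamma (sum a (insert i T) + b))"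
  proof -
    have "(\<Prod>j\<in>T. Gamma (a j)) \<ge> 0" using insert.prems by (intro prod_nonneg less_imp_le[OF Gamma_real_pos]) auto
    moreover have "Gamma (sum a T + (a i + b)) > 0"
      using insert.prems ai by (intro Gamma_real_pos add_nonneg_pos sum_nonneg) (auto intro: less_imp_le)
    moreover have "Gamma (a i + b) > 0" "Gamma (a i) > 0" "Gamma b > 0" using insert.prems ai by (auto intro: Gamma_real_pos)
    ultimately show ?thesis using insert.hyps
      by (simp add: Beta_def ennreal_mult'[symmetric] field_simps)
  qed
  finally show ?case .
qed

lemma pochhammer_Gamma_real:
  fixes z :: real
  assumes "z > 0"
  shows "pochhammer z n = Gamma (z + of_nat n) / Gamma z"
proof (rule pochhammer_Gamma)
  show "z \<notin> \<int>\<^sub>\<le>\<^sub>0" using assms nonpos_Ints_nonpos by fastforce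
qed

lemma dirichlet_density_measurable [measurable]:
  "finite S \<Longrightarrow> dirichlet_density \<alpha> S m \<in> borel_measurable (Pi\<^sub>M (S - {m}) (\<lambda>_. lborel))"
  unfolding dirichlet_density_def by measurable

lemma dirichlet_density_nonneg:
  assumes "finite S" "\<forall>i\<in>S. 0 < \<alpha> i"
  shows "0 \<le> dirichlet_density \<alpha> S m x"
proof -
  have "0 \<le> Gamma (\<Sum>i\<in>S. \<alpha> i)"
  proof (cases "S = {}")
    case False
    hence "0 < (\<Sum>i\<in>S. \<alpha> i)" using assms by (intro sum_pos) auto
    thus ?thesis by (simp add: less_imp_le)
  qed simp
  moreover have "0 \<le> (\<Prod>i\<in>S. Gamma (\<alpha> i))" using assms by (intro prod_nonneg) (auto intro: less_imp_le)
  ultimately show ?thesis unfolding dirichlet_density_def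
    by (auto intro!: mult_nonneg_nonneg divide_nonneg_nonneg prod_nonneg)
qed

lemma integral_dirichlet_density_monomial:
  assumes finS: "finite S" and mS: "m \<in> S" and apos: "\<forall>i\<in>S. 0 < \<alpha> i"
  shows "(\<integral>x. dirichlet_density \<alpha> S m x * ((\<Prod>c\<in>S - {m}. x c ^ n c) * (1 - (\<Sum>c\<in>S - {m}. x c)) ^ n m)
            \<partial>Pi\<^sub>M (S - {m}) (\<lambda>_. lborel))
       = (\<Prod>c\<in>S. pochhammer (\<alpha> c) (n c)) / pochhammer (\<Sum>c\<in>S. \<alpha> c) (\<Sum>c\<in>S. n c)"
proof -
  define T where "T = S - {m}"
  define C where "C = Gamma (\<Sum>i\<in>S. \<alpha> i) / (\<Prod>i\<in>S. Gamma (\<alpha> i))"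
  define a where "a c = \<alpha> c + real (n c)" for c
  have finT: "finite T" and mT: "m \<notin> T" and S_eq: "S = insert m T"
    using finS mS by (auto simp: T_def)
  have apos': "\<forall>i\<in>T. 0 < a i" "0 < a m"
    using apos mS by (auto simp: T_def a_def intro!: add_pos_nonneg)
  have apos_sum: "0 < sum a T + a m"
    using apos' by (intro add_nonneg_pos[OF sum_nonneg]) (auto intro: less_imp_le)
  have "(\<integral>x. dirichlet_density \<alpha> S m x * ((\<Prod>c\<in>T. x c ^ n c) * (1 - (\<Sum>c\<in>T. x c)) ^ n m) \<partial>Pi\<^sub>M T (\<lambda>_. lborel))
      = (\<integral>x. C * simplex_density T a (a m) x \<partial>Pi\<^sub>M T (\<lambda>_. lborel))"
  proof (intro Bochner_Integration.integral_cong refl)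
    fix x :: "nat \<Rightarrow> real"
    show "dirichlet_density \<alpha> S m x * ((\<Prod>c\<in>T. x c ^ n c) * (1 - (\<Sum>c\<in>T. x c)) ^ n m)
        = C * simplex_density T a (a m) x"
    proof (cases "(\<forall>i\<in>T. 0 < x i) \<and> (\<Sum>i\<in>T. x i) < 1")
      case True
      have "x c powr (\<alpha> c - 1) * x c ^ n c = x c powr (a c - 1)" if "c \<in> T" for c
        using True that by (simp add: a_def powr_realpow[symmetric] powr_add[symmetric] algebra_simps)
      moreover have "(1 - (\<Sum>i\<in>T. x i)) powr (\<alpha> m - 1) * (1 - (\<Sum>i\<in>T. x i)) ^ n m
          = (1 - (\<Sum>i\<in>T. x i)) powr (a m - 1)"
        using True by (simp add: a_def powr_realpow[symmetric] powr_add[symmetric] algebra_simps)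
      ultimately show ?thesis
        using True unfolding dirichlet_density_def simplex_density_def C_def T_def[symmetric]
        by (simp add: prod.distrib[symmetric] mult_ac cong: prod.cong)
    next
      case False
      thus ?thesis unfolding dirichlet_density_def simplex_density_def T_def[symmetric] by auto
    qed
  qed
  also have "\<dots> = C * enn2real (\<integral>\<^sup>+x. ennreal (simplex_density T a (a m) x) \<partial>Pi\<^sub>M T (\<lambda>_. lborel))"
    by (subst integral_eq_nn_integral[symmetric]) (use finT in \<open>auto simp: simplex_density_nonneg\<close>)
  also have "\<dots> = C * ((\<Prod>i\<in>T. Gamma (a i)) * Gamma (a m) / Gamma (sum a T + a m))"
  proof -
    have "0 \<le> (\<Prod>i\<in>T. Gamma (a i)) * Gamma (a m) / Gamma (sum a T + a m)"
      using apos' apos_sum by (intro divide_nonneg_nonneg mult_nonneg_nonneg prod_nonneg) (auto intro: less_imp_le)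
    thus ?thesis by (subst nn_integral_simplex_density[OF finT apos']) simp
  qed
  also have "\<dots> = (\<Prod>c\<in>S. pochhammer (\<alpha> c) (n c)) / pochhammer (\<Sum>c\<in>S. \<alpha> c) (\<Sum>c\<in>S. n c)"
  proof -
    have spos: "0 < (\<Sum>c\<in>S. \<alpha> c)" using apos mS finS by (intro sum_pos) auto
    have "(\<Prod>c\<in>S. pochhammer (\<alpha> c) (n c)) = (\<Prod>c\<in>S. Gamma (a c)) / (\<Prod>c\<in>S. Gamma (\<alpha> c))"
      using apos by (simp add: a_def pochhammer_Gamma_real prod_dividef)
    also have "(\<Prod>c\<in>S. Gamma (a c)) = (\<Prod>i\<in>T. Gamma (a i)) * Gamma (a m)"
      using finT mT by (simp add: S_eq)
    finally have poch_eq: "(\<Prod>c\<in>S. pochhammer (\<alpha> c) (n c))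
        = (\<Prod>i\<in>T. Gamma (a i)) * Gamma (a m) / (\<Prod>c\<in>S. Gamma (\<alpha> c))" .
    have "sum a T + a m = (\<Sum>c\<in>S. \<alpha> c) + real (\<Sum>c\<in>S. n c)"
      unfolding S_eq using finT mT by (simp add: a_def sum.distrib)
    hence sum_eq: "pochhammer (\<Sum>c\<in>S. \<alpha> c) (\<Sum>c\<in>S. n c) = Gamma (sum a T + a m) / Gamma (\<Sum>c\<in>S. \<alpha> c)"
      by (simp add: pochhammer_Gamma_real[OF spos])
    have "Gamma (\<Sum>c\<in>S. \<alpha> c) > 0" "Gamma (sum a T + a m) > 0" "(\<Prod>c\<in>S. Gamma (\<alpha> c)) > 0"
      using spos apos_sum apos by (auto intro!: Gamma_real_pos prod_pos)
    thus ?thesis unfolding C_def poch_eq sum_eq by (simp add: field_simps)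
  qed
  finally show ?thesis unfolding T_def .
qed

lemma has_dirichlet_moment:
  assumes "prob_space M" and D: "has_dirichlet M X N \<alpha>"
    and X_meas: "\<And>c. c < N \<Longrightarrow> (\<lambda>\<omega>. X \<omega> c) \<in> borel_measurable M"
  shows "(\<integral>\<omega>. (\<Prod>c<N. X \<omega> c ^ n c) \<partial>M)
       = (\<Prod>c<N. pochhammer (\<alpha> c) (n c)) / pochhammer (\<Sum>c<N. \<alpha> c) (\<Sum>c<N. n c)"
proof -
  interpret prob_space M by fact
  define S where "S = {i\<in>{..<N}. 0 < \<alpha> i}"
  define m where "m = Max S"
  define T where "T = S - {m}"
  have H: "S \<noteq> {}" "\<forall>i<N. 0 \<le> \<alpha> i" "\<forall>i\<in>{..<N} - S. AE \<omega> in M. X \<omega> i = 0"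
    "distr M (Pi\<^sub>M T (\<lambda>_. lborel)) (\<lambda>\<omega>. restrict (X \<omega>) T)
         = density (Pi\<^sub>M T (\<lambda>_. lborel)) (\<lambda>x. ennreal (dirichlet_density \<alpha> S m x))"
    "AE \<omega> in M. X \<omega> m = 1 - (\<Sum>i\<in>T. X \<omega> i)"
    using D unfolding has_dirichlet_def Let_def S_def[symmetric] m_def[symmetric] T_def[symmetric] by auto
  have finS: "finite S" and SN: "S \<subseteq> {..<N}" and apos: "\<forall>c\<in>S. 0 < \<alpha> c"
    unfolding S_def by auto
  have mS: "m \<in> S" unfolding m_def using finS H(1) by (rule Max_in)
  have a0: "\<alpha> c = 0" if "c < N" "c \<notin> S" for c using that H(2) by (force simp: S_def)
  have prod_meas: "(\<lambda>\<omega>. \<Prod>c<N. X \<omega> c ^ n c) \<in> borel_measurable M"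
    using X_meas by measurable
  show ?thesis
  proof (cases "\<exists>c<N. c \<notin> S \<and> 0 < n c")
    case True
    \<comment> \<open>a coordinate with parameter \<open>0\<close> vanishes almost surely, so both sides are \<open>0\<close>\<close>
    then obtain c where c: "c < N" "c \<notin> S" "0 < n c" by auto
    have "AE \<omega> in M. X \<omega> c = 0" using H(3) c by auto
    hence "AE \<omega> in M. (\<Prod>c<N. X \<omega> c ^ n c) = 0"
      by eventually_elim (use c in \<open>auto intro!: prod_zero bexI[of _ c]\<close>)
    hence "(\<integral>\<omega>. (\<Prod>c<N. X \<omega> c ^ n c) \<partial>M) = (\<integral>\<omega>. 0 \<partial>M)"
      by (intro integral_cong_AE) (use prod_meas in auto)
    moreover have "(\<Prod>c<N. pochhammer (\<alpha> c) (n c)) = 0"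
      using c a0[of c] by (auto intro!: prod_zero bexI[of _ c] simp: pochhammer_0_left)
    ultimately show ?thesis by simp
  next
    case False
    hence n0: "n c = 0" if "c < N" "c \<notin> S" for c using that by auto
    define g where "g x = (\<Prod>c\<in>T. x c ^ n c) * (1 - (\<Sum>c\<in>T. x c)) ^ n m" for x :: "nat \<Rightarrow> real"
    have g_meas [measurable]: "g \<in> borel_measurable (Pi\<^sub>M T (\<lambda>_. lborel))"
      unfolding g_def T_def using finS by measurable
    have restrict_meas [measurable]: "(\<lambda>\<omega>. restrict (X \<omega>) T) \<in> measurable M (Pi\<^sub>M T (\<lambda>_. lborel))"
      by (rule measurable_restrict) (use SN X_meas in \<open>auto simp: T_def\<close>)
    have prodS: "(\<Prod>c<N. f c) = (\<Prod>c\<in>S. f c)" if "\<And>c. c < N \<Longrightarrow> c \<notin> S \<Longrightarrow> f c = 1"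
      for f :: "nat \<Rightarrow> real"
      by (rule prod.mono_neutral_right) (use SN that in auto)
    have "AE \<omega> in M. (\<Prod>c<N. X \<omega> c ^ n c) = g (restrict (X \<omega>) T)"
      using H(5) by eventually_elim (use finS mS in \<open>simp add: prodS n0 g_def T_def prod.remove[of S m]\<close>)
    hence "(\<integral>\<omega>. (\<Prod>c<N. X \<omega> c ^ n c) \<partial>M) = (\<integral>\<omega>. g (restrict (X \<omega>) T) \<partial>M)"
      by (intro integral_cong_AE) (use prod_meas in auto)
    also have "\<dots> = integral\<^sup>L (distr M (Pi\<^sub>M T (\<lambda>_. lborel)) (\<lambda>\<omega>. restrict (X \<omega>) T)) g"
      by (rule integral_distr[symmetric]) measurable
    also have "\<dots> = integral\<^sup>L (density (Pi\<^sub>M T (\<lambda>_. lborel)) (\<lambda>x. ennreal (dirichlet_density \<alpha> S m x))) g"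
      by (simp add: H(4))
    also have "\<dots> = (\<integral>x. dirichlet_density \<alpha> S m x * g x \<partial>Pi\<^sub>M T (\<lambda>_. lborel))"
      by (subst integral_density)
        (use finS apos dirichlet_density_measurable[OF finS, of \<alpha> m, folded T_def]
          in \<open>auto intro!: dirichlet_density_nonneg\<close>)
    also have "\<dots> = (\<Prod>c\<in>S. pochhammer (\<alpha> c) (n c)) / pochhammer (\<Sum>c\<in>S. \<alpha> c) (\<Sum>c\<in>S. n c)"
      unfolding g_def T_def by (rule integral_dirichlet_density_monomial[OF finS mS apos])
    also have "\<dots> = (\<Prod>c<N. pochhammer (\<alpha> c) (n c)) / pochhammer (\<Sum>c<N. \<alpha> c) (\<Sum>c<N. n c)"
    proof -
      have "(\<Sum>c<N. \<alpha> c) = (\<Sum>c\<in>S. \<alpha> c)" "(\<Sum>c<N. n c) = (\<Sum>c\<in>S. n c)"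
        by (rule sum.mono_neutral_right; use SN a0 n0 in auto)+
      thus ?thesis by (simp add: prodS n0)
    qed
    finally show ?thesis .
  qed
qed

lemma sets_beta_one [simp, measurable_cong]: "sets (beta_one \<theta>) = sets borel"
  by (simp add: beta_one_def)

lemma space_beta_one [simp]: "space (beta_one \<theta>) = UNIV"
  by (simp add: beta_one_def)

lemma nn_integral_beta_one_monomial:
  fixes R T :: nat and \<theta> :: real
  assumes tpos: "\<theta> > 0"
  shows "(\<integral>\<^sup>+y. ennreal (indicator {0..1} y * y ^ R * (1 - y) ^ T) \<partial>beta_one \<theta>)
       = ennreal (\<theta> * fact R / pochhammer (\<theta> + T) (Suc R))"
proof -
  have "(\<integral>\<^sup>+y. ennreal (indicator {0..1} y * y ^ R * (1 - y) ^ T) \<partial>beta_one \<theta>)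
      = (\<integral>\<^sup>+y. ennreal (indicator {0<..<1} y * \<theta> * (1 - y) powr (\<theta> - 1)) * ennreal (indicator {0..1} y * y ^ R * (1 - y) ^ T) \<partial>lborel)"
    unfolding beta_one_def by (rule nn_integral_density) measurable
  also have "\<dots> = (\<integral>\<^sup>+y. ennreal \<theta> * ennreal (indicator {0<..<1} y * y powr (real (Suc R) - 1) * (1 - y) powr ((\<theta> + T) - 1)) \<partial>lborel)"
  proof (intro nn_integral_cong)
    fix y :: real
    show "ennreal (indicator {0<..<1} y * \<theta> * (1 - y) powr (\<theta> - 1)) * ennreal (indicator {0..1} y * y ^ R * (1 - y) ^ T)
        = ennreal \<theta> * ennreal (indicator {0<..<1} y * y powr (real (Suc R) - 1) * (1 - y) powr ((\<theta> + T) - 1))"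
    proof (cases "0 < y \<and> y < 1")
      case True
      have "(1 - y) powr (\<theta> - 1) * (1 - y) ^ T = (1 - y) powr ((\<theta> + T) - 1)"
        using True by (simp add: powr_realpow[symmetric] powr_add[symmetric] algebra_simps)
      moreover have "y ^ R = y powr (real (Suc R) - 1)" using True by (simp add: powr_realpow)
      ultimately show ?thesis using True tpos
        by (simp add: indicator_def ennreal_mult'[symmetric] mult_ac)
    qed (auto simp: indicator_def)
  qed
  also have "\<dots> = ennreal \<theta> * ennreal (1 powr (real (Suc R) + (\<theta> + T) - 1) * Beta (real (Suc R)) (\<theta> + T))"
    using tpos by (subst nn_integral_cmult) (auto simp: nn_integral_beta_kernel_scaled add_pos_nonneg simp del: of_nat_Suc)
  also have "\<dots> = ennreal (\<theta> * fact R / pochhammer (\<theta> + T) (Suc R))"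
  proof -
    have tp: "\<theta> + T > 0" using tpos by (simp add: add_pos_nonneg)
    have "Beta (real (Suc R)) (\<theta> + T) = fact R / pochhammer (\<theta> + T) (Suc R)"
    proof -
      have "Gamma (real (Suc R)) = fact R" using Gamma_fact[of R] by (simp add: add.commute)
      moreover have "pochhammer (\<theta> + T) (Suc R) = Gamma (\<theta> + T + real (Suc R)) / Gamma (\<theta> + T)"
        by (rule pochhammer_Gamma_real[OF tp])
      moreover have "Gamma (\<theta> + T) > 0" "Gamma (\<theta> + T + real (Suc R)) > 0"
        using tp by (auto intro!: Gamma_real_pos add_pos_nonneg simp del: of_nat_Suc)
      moreover have "pochhammer (\<theta> + T) (Suc R) > 0" using tp by (rule pochhammer_pos)
      ultimately show ?thesis by (simp add: Beta_def field_simps add_ac)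
    qed
    moreover have "Beta (real (Suc R)) (\<theta> + T) \<ge> 0"
      using tp by (simp add: Beta_def less_imp_le del: of_nat_Suc)
    ultimately show ?thesis using tpos by (simp add: ennreal_mult'[symmetric])
  qed
  finally show ?thesis .
qed

lemma emeasure_beta_one_Int_unit:
  assumes "A \<in> sets borel"
  shows "emeasure (beta_one \<theta>) (A \<inter> {0..1}) = emeasure (beta_one \<theta>) A"
  unfolding beta_one_def using assms
  by (subst (1 2) emeasure_density) (auto intro!: nn_integral_cong simp: indicator_def)

lemma prob_space_beta_one:
  assumes "\<theta> > 0"
  shows "prob_space (beta_one \<theta>)"
proof
  have "emeasure (beta_one \<theta>) (space (beta_one \<theta>)) = emeasure (beta_one \<theta>) {0..1}"
    using emeasure_beta_one_Int_unit[of UNIV \<theta>] by simp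
  also have "\<dots> = (\<integral>\<^sup>+y. indicator {0..1} y \<partial>beta_one \<theta>)"
    by simp
  also have "\<dots> = (\<integral>\<^sup>+y. ennreal (indicator {0..1} y * y ^ 0 * (1 - y) ^ 0) \<partial>beta_one \<theta>)"
    by (intro nn_integral_cong) (auto simp: indicator_def)
  also have "\<dots> = 1" using assms by (subst nn_integral_beta_one_monomial) auto
  finally show "emeasure (beta_one \<theta>) (space (beta_one \<theta>)) = 1" .
qed

lemma measure_beta_one_Int_unit:
  "A \<in> sets borel \<Longrightarrow> measure (beta_one \<theta>) (A \<inter> {0..1}) = measure (beta_one \<theta>) A"
  by (simp add: measure_def emeasure_beta_one_Int_unit)

lemma nn_integral_beta_one_prod_monomial:
  assumes "\<theta> > 0" "finite A" "A \<noteq> {}"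
  shows "(\<integral>\<^sup>+y. ennreal (\<Prod>j\<in>A. indicator {0..1} y * y ^ r j * (1 - y) ^ t j) \<partial>beta_one \<theta>)
       = ennreal (\<theta> * fact (\<Sum>j\<in>A. r j) / pochhammer (\<theta> + real (\<Sum>j\<in>A. t j)) (Suc (\<Sum>j\<in>A. r j)))"
proof -
  have "(\<Prod>j\<in>A. indicator {0..1} y * y ^ r j * (1 - y) ^ t j)
      = indicator {0..1} y * y ^ (\<Sum>j\<in>A. r j) * (1 - y) ^ (\<Sum>j\<in>A. t j)" for y :: real
    using assms(2,3) by (simp add: prod.distrib power_sum indicator_def card_gt_0_iff)
  then show ?thesis
    using nn_integral_beta_one_monomial[OF assms(1)] by simp
qed

lemma prod_nn_integral_beta_one_blocks:
  assumes "\<theta> > 0" "finite K" and P: "partition_on K P"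
  shows "(\<Prod>A\<in>P. \<integral>\<^sup>+y. ennreal (\<Prod>j\<in>A. indicator {0..1} y * y ^ r j * (1 - y) ^ t j) \<partial>beta_one \<theta>)
       = ennreal (\<Prod>A\<in>P. \<theta> * fact (\<Sum>j\<in>A. r j) / pochhammer (\<theta> + real (\<Sum>j\<in>A. t j)) (Suc (\<Sum>j\<in>A. r j)))"
proof -
  have "(\<Prod>A\<in>P. \<integral>\<^sup>+y. ennreal (\<Prod>j\<in>A. indicator {0..1} y * y ^ r j * (1 - y) ^ t j) \<partial>beta_one \<theta>)
      = (\<Prod>A\<in>P. ennreal (\<theta> * fact (\<Sum>j\<in>A. r j) / pochhammer (\<theta> + real (\<Sum>j\<in>A. t j)) (Suc (\<Sum>j\<in>A. r j))))"
  proof (rule prod.cong[OF refl])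
    fix A assume "A \<in> P"
    then have "A \<subseteq> K" "A \<noteq> {}"
      using partition_onD1[OF P] partition_onD3[OF P] by auto
    then show "(\<integral>\<^sup>+y. ennreal (\<Prod>j\<in>A. indicator {0..1} y * y ^ r j * (1 - y) ^ t j) \<partial>beta_one \<theta>)
        = ennreal (\<theta> * fact (\<Sum>j\<in>A. r j) / pochhammer (\<theta> + real (\<Sum>j\<in>A. t j)) (Suc (\<Sum>j\<in>A. r j)))"
      using assms(1,2) finite_subset by (intro nn_integral_beta_one_prod_monomial) auto
  qed
  also have "\<dots> = ennreal (\<Prod>A\<in>P. \<theta> * fact (\<Sum>j\<in>A. r j) / pochhammer (\<theta> + real (\<Sum>j\<in>A. t j)) (Suc (\<Sum>j\<in>A. r j)))"
    using assms(1) by (intro prod_ennreal divide_nonneg_nonneg mult_nonneg_nonneg less_imp_le[OF pochhammer_pos]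
        add_pos_nonneg) (auto intro: sum_nonneg)
  finally show ?thesis .
qed

section \<open>Moments of a Dirichlet vector\<close>

lemma prod_comp_eq_prod_power_card:
  fixes f :: "'b \<Rightarrow> 'c::comm_monoid_mult"
  assumes "finite I" "finite C" "\<sigma> ` I \<subseteq> C"
  shows "(\<Prod>i\<in>I. f (\<sigma> i)) = (\<Prod>c\<in>C. f c ^ card {i\<in>I. \<sigma> i = c})"
proof -
  have "(\<Prod>i\<in>I. f (\<sigma> i)) = (\<Prod>c\<in>C. \<Prod>i\<in>{i\<in>I. \<sigma> i = c}. f (\<sigma> i))"
    by (rule prod.group[symmetric]) (use assms in auto)
  also have "\<dots> = (\<Prod>c\<in>C. f c ^ card {i\<in>I. \<sigma> i = c})"
    by (intro prod.cong refl) simp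
  finally show ?thesis .
qed

lemma sum_card_fibers:
  assumes "finite I" "finite C" "\<sigma> ` I \<subseteq> C"
  shows "(\<Sum>c\<in>C. card {i\<in>I. \<sigma> i = c}) = card I"
  using sum.group[OF assms, of "\<lambda>_. 1 :: nat"] by simp

locale dirichlet_vector = prob_space M for M :: "'w measure" +
  fixes X :: "'w \<Rightarrow> nat \<Rightarrow> real" and N :: nat and \<alpha> :: "nat \<Rightarrow> real" and \<beta> :: real
  assumes has_dirichlet: "has_dirichlet M X N \<alpha>"
    and sum_alpha: "(\<Sum>c<N. \<alpha> c) = \<beta>"
    and X_measurable: "\<And>c. c < N \<Longrightarrow> (\<lambda>\<omega>. X \<omega> c) \<in> borel_measurable M"
    and X_bounded: "\<And>\<omega> c. \<omega> \<in> space M \<Longrightarrow> c < N \<Longrightarrow> 0 \<le> X \<omega> c \<and> X \<omega> c \<le> 1"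
begin

lemma beta_pos: "\<beta> > 0"
proof -
  obtain m where m: "m < N" "0 < \<alpha> m" and nonneg: "\<forall>c<N. 0 \<le> \<alpha> c"
    using has_dirichlet unfolding has_dirichlet_def Let_def by auto
  have "\<alpha> m \<le> (\<Sum>c<N. \<alpha> c)"
    using m nonneg by (intro member_le_sum) auto
  with m show ?thesis by (simp add: sum_alpha)
qed

definition moment :: "'a set \<Rightarrow> ('a \<Rightarrow> nat) \<Rightarrow> real" where
  "moment I \<sigma> = (\<integral>\<omega>. (\<Prod>i\<in>I. X \<omega> (\<sigma> i)) \<partial>M)"

lemma integrable_moment:
  assumes "\<sigma> ` I \<subseteq> {..<N}"
  shows "integrable M (\<lambda>\<omega>. \<Prod>i\<in>I. X \<omega> (\<sigma> i))"
proof (rule integrable_const_bound[where B=1])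
  show "AE \<omega> in M. norm (\<Prod>i\<in>I. X \<omega> (\<sigma> i)) \<le> 1"
  proof (rule AE_I2)
    fix \<omega> assume "\<omega> \<in> space M"
    hence "(\<Prod>i\<in>I. \<bar>X \<omega> (\<sigma> i)\<bar>) \<le> 1"
      using X_bounded assms by (intro prod_le_1) auto
    thus "norm (\<Prod>i\<in>I. X \<omega> (\<sigma> i)) \<le> 1" by (simp add: abs_prod)
  qed
  show "(\<lambda>\<omega>. \<Prod>i\<in>I. X \<omega> (\<sigma> i)) \<in> borel_measurable M"
    using assms X_measurable by (auto intro!: borel_measurable_prod)
qed

lemma moment_eq:
  assumes "finite I" "\<sigma> ` I \<subseteq> {..<N}"
  shows "moment I \<sigma> = (\<Prod>c<N. pochhammer (\<alpha> c) (card {i\<in>I. \<sigma> i = c})) / pochhammer \<beta> (card I)"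
proof -
  have "moment I \<sigma> = (\<integral>\<omega>. (\<Prod>c<N. X \<omega> c ^ card {i\<in>I. \<sigma> i = c}) \<partial>M)"
    unfolding moment_def
    by (intro Bochner_Integration.integral_cong refl prod_comp_eq_prod_power_card) (use assms in auto)
  also have "\<dots> = (\<Prod>c<N. pochhammer (\<alpha> c) (card {i\<in>I. \<sigma> i = c}))
                  / pochhammer \<beta> (\<Sum>c<N. card {i\<in>I. \<sigma> i = c})"
    using has_dirichlet_moment[OF prob_space_axioms has_dirichlet X_measurable] by (simp add: sum_alpha)
  finally show ?thesis
    using sum_card_fibers[of I "{..<N}" \<sigma>] assms by simp
qed

text \<open>The Polya urn rule: after the draws \<open>\<sigma>\<close>, colour \<open>c\<close> is drawn with probability
  \<open>(\<alpha> c + #draws of c) / (\<beta> + #draws)\<close>.\<close>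
lemma moment_insert:
  assumes "finite I" "x \<notin> I" "\<sigma> ` I \<subseteq> {..<N}" "c < N"
  shows "(\<beta> + card I) * moment (insert x I) (\<sigma>(x := c)) = (\<alpha> c + card {i\<in>I. \<sigma> i = c}) * moment I \<sigma>"
proof -
  define n where "n c' = card {i\<in>I. \<sigma> i = c'}" for c'
  have n': "card {i\<in>insert x I. (\<sigma>(x := c)) i = c'} = n c' + (if c' = c then 1 else 0)" for c'
  proof -
    have "{i\<in>insert x I. (\<sigma>(x := c)) i = c'} = (if c' = c then insert x {i\<in>I. \<sigma> i = c'} else {i\<in>I. \<sigma> i = c'})"
      using assms(2) by auto
    thus ?thesis unfolding n_def using assms(1,2) by auto
  qed
  have "(\<Prod>c'<N. pochhammer (\<alpha> c') (card {i\<in>insert x I. (\<sigma>(x := c)) i = c'}))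
      = pochhammer (\<alpha> c) (Suc (n c)) * (\<Prod>c'\<in>{..<N} - {c}. pochhammer (\<alpha> c') (n c'))"
    unfolding n' using assms(4) by (subst prod.remove[of _ c]) (auto intro!: prod.cong)
  also have "\<dots> = (\<alpha> c + n c) * (\<Prod>c'<N. pochhammer (\<alpha> c') (n c'))"
    using assms(4) by (simp add: pochhammer_Suc prod.remove[of _ c] mult_ac)
  finally have poch: "(\<Prod>c'<N. pochhammer (\<alpha> c') (card {i\<in>insert x I. (\<sigma>(x := c)) i = c'}))
      = (\<alpha> c + n c) * (\<Prod>c'<N. pochhammer (\<alpha> c') (n c'))" .
  have range': "(\<sigma>(x := c)) ` insert x I \<subseteq> {..<N}" using assms by auto
  have "(\<beta> + card I) * moment (insert x I) (\<sigma>(x := c))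
      = (\<beta> + card I) * ((\<alpha> c + n c) * (\<Prod>c'<N. pochhammer (\<alpha> c') (n c'))) / (pochhammer \<beta> (card I) * (\<beta> + card I))"
    unfolding moment_eq[OF finite.insertI[OF assms(1)] range'] poch
    using assms(1,2) by (simp add: pochhammer_Suc)
  also have "\<dots> = (\<alpha> c + n c) * moment I \<sigma>"
  proof -
    have "\<beta> + card I \<noteq> 0"
      using beta_pos by (simp add: add_pos_nonneg)
    hence "(\<beta> + card I) * Z / (pochhammer \<beta> (card I) * (\<beta> + card I)) = Z / pochhammer \<beta> (card I)"
      for Z :: real by (subst mult.commute[of "pochhammer \<beta> (card I)"]) simp
    thus ?thesis unfolding moment_eq[OF assms(1,3)] n_def[symmetric] by simp
  qed
  finally show ?thesis by (simp add: n_def)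
qed

definition sum_moment :: "'a set \<Rightarrow> ('a \<Rightarrow> nat set) \<Rightarrow> real" where
  "sum_moment I J = (\<integral>\<omega>. (\<Prod>i\<in>I. \<Sum>c\<in>J i. X \<omega> c) \<partial>M)"

lemma sum_moment_eq_sum_PiE_moment:
  assumes "finite I" "\<And>i. i \<in> I \<Longrightarrow> J i \<subseteq> {..<N}"
  shows "sum_moment I J = (\<Sum>\<sigma>\<in>Pi\<^sub>E I J. moment I \<sigma>)"
proof -
  have "finite (J i)" if "i \<in> I" for i using assms(2)[OF that] finite_subset by blast
  hence "sum_moment I J = (\<integral>\<omega>. (\<Sum>\<sigma>\<in>Pi\<^sub>E I J. \<Prod>i\<in>I. X \<omega> (\<sigma> i)) \<partial>M)"
    unfolding sum_moment_def by (intro Bochner_Integration.integral_cong refl prod_sum_PiE assms(1))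
  also have "\<dots> = (\<Sum>\<sigma>\<in>Pi\<^sub>E I J. moment I \<sigma>)"
    unfolding moment_def
    by (rule Bochner_Integration.integral_sum, rule integrable_moment) (use assms(2) in \<open>auto simp: PiE_def Pi_def\<close>)
  finally show ?thesis .
qed

lemma sum_moment_insert:
  assumes I: "finite I" "x \<notin> I" and J: "\<And>i. i \<in> insert x I \<Longrightarrow> J i \<subseteq> {..<N}"
  shows "(\<beta> + card I) * sum_moment (insert x I) J
       = (\<Sum>c\<in>J x. \<alpha> c) * sum_moment I J + (\<Sum>j\<in>I. sum_moment I (J(j := J j \<inter> J x)))"
proof -
  have fJ: "finite (J i)" if "i \<in> insert x I" for i using J[OF that] finite_subset by blast
  have finPi: "finite (Pi\<^sub>E I J)" using I fJ by (intro finite_PiE) auto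
  have sig: "\<sigma> ` I \<subseteq> {..<N}" if "\<sigma> \<in> Pi\<^sub>E I J" for \<sigma> using that J by (auto simp: PiE_def Pi_def)
  have count: "(\<Sum>c\<in>J x. card {i\<in>I. \<sigma> i = c}) * m = (\<Sum>j\<in>I. if \<sigma> j \<in> J x then m else 0)"
    for \<sigma> and m :: real
  proof -
    have "(\<Sum>c\<in>J x. card {i\<in>I. \<sigma> i = c}) = (\<Sum>c\<in>J x. card {i\<in>{i\<in>I. \<sigma> i \<in> J x}. \<sigma> i = c})"
      by (intro sum.cong refl arg_cong[where f=card]) auto
    also have "\<dots> = card {i\<in>I. \<sigma> i \<in> J x}"
      by (rule sum_card_fibers) (use I fJ in auto)
    finally show ?thesis
      using I(1) by (simp add: sum.If_cases Int_def)
  qed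
  have "sum_moment (insert x I) J = (\<Sum>\<sigma>\<in>Pi\<^sub>E (insert x I) J. moment (insert x I) \<sigma>)"
    by (rule sum_moment_eq_sum_PiE_moment) (use I J in auto)
  also have "\<dots> = (\<Sum>c\<in>J x. \<Sum>\<sigma>\<in>Pi\<^sub>E I J. moment (insert x I) (\<sigma>(x := c)))"
    unfolding PiE_insert_eq
    by (subst sum.reindex[OF inj_combinator[OF I(2)], unfolded comp_def])
      (simp add: sum.cartesian_product case_prod_unfold)
  finally have "(\<beta> + card I) * sum_moment (insert x I) J
      = (\<Sum>c\<in>J x. \<Sum>\<sigma>\<in>Pi\<^sub>E I J. (\<beta> + card I) * moment (insert x I) (\<sigma>(x := c)))"
    by (simp add: sum_distrib_left)
  also have "\<dots> = (\<Sum>c\<in>J x. \<Sum>\<sigma>\<in>Pi\<^sub>E I J. (\<alpha> c + card {i\<in>I. \<sigma> i = c}) * moment I \<sigma>)"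
    by (intro sum.cong refl moment_insert I sig) (use J in auto)
  also have "\<dots> = (\<Sum>\<sigma>\<in>Pi\<^sub>E I J. (\<Sum>c\<in>J x. \<alpha> c) * moment I \<sigma>
                    + (\<Sum>j\<in>I. if \<sigma> j \<in> J x then moment I \<sigma> else 0))"
    by (subst sum.swap) (simp add: sum.distrib distrib_right sum_distrib_right[symmetric] count[symmetric])
  also have "\<dots> = (\<Sum>c\<in>J x. \<alpha> c) * sum_moment I J + (\<Sum>j\<in>I. sum_moment I (J(j := J j \<inter> J x)))"
  proof -
    have "(\<Sum>\<sigma>\<in>Pi\<^sub>E I J. if \<sigma> j \<in> J x then moment I \<sigma> else 0) = sum_moment I (J(j := J j \<inter> J x))"
      if j: "j \<in> I" for j
    proof -
      have "{\<sigma>\<in>Pi\<^sub>E I J. \<sigma> j \<in> J x} = Pi\<^sub>E I (J(j := J j \<inter> J x))"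
        using j by (auto simp: PiE_def Pi_def)
      moreover have "sum_moment I (J(j := J j \<inter> J x)) = (\<Sum>\<sigma>\<in>Pi\<^sub>E I (J(j := J j \<inter> J x)). moment I \<sigma>)"
        by (rule sum_moment_eq_sum_PiE_moment) (use I J in auto)
      ultimately show ?thesis
        using sum.inter_filter[OF finPi, where P="\<lambda>\<sigma>. \<sigma> j \<in> J x" and g="moment I"]
        by simp
    qed
    thus ?thesis
      by (simp add: sum.distrib sum_distrib_left sum.swap[of _ I] sum_moment_eq_sum_PiE_moment I J)
  qed
  finally show ?thesis .
qed

end

section \<open>Moments of the Dirichlet process\<close>

lemma finite_atoms:
  fixes B :: "'i \<Rightarrow> 'a set"
  assumes K: "finite K" "K \<noteq> {}" and B: "\<And>j. j \<in> K \<Longrightarrow> B j \<in> sets F" and \<Omega>: "\<Omega> \<in> sets F"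
  obtains N :: nat and C :: "nat \<Rightarrow> 'a set" where
    "0 < N" "\<And>c. c < N \<Longrightarrow> C c \<in> sets F" "disjoint_family_on C {..<N}" "(\<Union>c<N. C c) = \<Omega>"
    "\<And>c j. c < N \<Longrightarrow> j \<in> K \<Longrightarrow> C c \<subseteq> B j \<or> C c \<inter> B j = {}"
proof -
  define N where "N = card (Pow K)"
  obtain h where h: "bij_betw h {..<N} (Pow K)"
    using ex_bij_betw_nat_finite[of "Pow K"] K by (auto simp: N_def atLeast0LessThan)
  have hK: "h c \<subseteq> K" if "c < N" for c
    using h that by (auto simp: bij_betw_def)
  have h_inj: "c = c'" if "h c = h c'" "c < N" "c' < N" for c c'
    using h that by (auto simp: bij_betw_def inj_on_def)
  have h_surj: "\<exists>c<N. h c = L" if "L \<subseteq> K" for L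
  proof -
    have "L \<in> h ` {..<N}" using h that by (auto simp: bij_betw_def)
    thus ?thesis by (metis imageE lessThan_iff)
  qed
  define C where "C c = {y \<in> \<Omega>. {j\<in>K. y \<in> B j} = h c}" for c
  show thesis
  proof
    show "0 < N" using K by (simp add: N_def card_Pow)
  next
    fix c assume c: "c < N"
    have "y \<in> C c \<longleftrightarrow> y \<in> \<Omega> \<inter> (\<Inter>j\<in>K. if j \<in> h c then B j else space F - B j)" for y
    proof -
      have "({j\<in>K. y \<in> B j} = h c) \<longleftrightarrow> (\<forall>j\<in>K. y \<in> B j \<longleftrightarrow> j \<in> h c)"
        using hK[OF c] by blast
      moreover have "y \<in> space F" if "y \<in> \<Omega>" using that sets.sets_into_space[OF \<Omega>] by blast
      ultimately show ?thesis unfolding C_def by auto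
    qed
    hence "C c = \<Omega> \<inter> (\<Inter>j\<in>K. if j \<in> h c then B j else space F - B j)" by blast
    also have "\<dots> \<in> sets F"
      using K B \<Omega> by (intro sets.Int sets.finite_INT) auto
    finally show "C c \<in> sets F" .
  next
    show "disjoint_family_on C {..<N}"
      unfolding disjoint_family_on_def C_def using h_inj by auto
  next
    show "(\<Union>c<N. C c) = \<Omega>"
    proof (intro equalityI subsetI)
      fix y assume y: "y \<in> \<Omega>"
      obtain c where c: "c < N" "h c = {j\<in>K. y \<in> B j}" using h_surj[of "{j\<in>K. y \<in> B j}"] by auto
      with y have "y \<in> C c" by (simp add: C_def)
      with c show "y \<in> (\<Union>c<N. C c)" by blast
    qed (auto simp: C_def)
  next
    fix c j assume "c < N" "j \<in> K"
    have "j \<in> h c \<longleftrightarrow> y \<in> B j" if "y \<in> C c" for y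
      using that \<open>j \<in> K\<close> unfolding C_def by blast
    then show "C c \<subseteq> B j \<or> C c \<inter> B j = {}" by blast
  qed
qed

lemma (in finite_measure) measure_Int_eq_sum_atoms:
  fixes C :: "nat \<Rightarrow> 'a set"
  assumes C_Un: "(\<Union>c<N. C c) = \<Omega>" and C_sets: "\<And>c. c < N \<Longrightarrow> C c \<in> sets M"
    and C_disj: "disjoint_family_on C {..<N}" and sat: "\<And>c. c < N \<Longrightarrow> C c \<subseteq> A \<or> C c \<inter> A = {}"
  shows "measure M (A \<inter> \<Omega>) = (\<Sum>c\<in>{c\<in>{..<N}. C c \<subseteq> A}. measure M (C c))"
proof -
  have "A \<inter> \<Omega> = (\<Union>c\<in>{c\<in>{..<N}. C c \<subseteq> A}. C c)"
  proof (intro equalityI subsetI)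
    fix y assume y: "y \<in> A \<inter> \<Omega>"
    then obtain c where c: "c < N" "y \<in> C c" using C_Un by blast
    with y sat[OF c(1)] show "y \<in> (\<Union>c\<in>{c\<in>{..<N}. C c \<subseteq> A}. C c)" by blast
  qed (use C_Un in blast)
  then have "measure M (A \<inter> \<Omega>) = measure M (\<Union>c\<in>{c\<in>{..<N}. C c \<subseteq> A}. C c)"
    by simp
  also have "\<dots> = (\<Sum>c\<in>{c\<in>{..<N}. C c \<subseteq> A}. measure M (C c))"
  proof (rule finite_measure_finite_Union)
    show "finite {c\<in>{..<N}. C c \<subseteq> A}" by (rule finite_subset[of _ "{..<N}"]) auto
    show "disjoint_family_on C {c\<in>{..<N}. C c \<subseteq> A}"
      by (rule disjoint_family_on_mono[OF _ C_disj]) auto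
  qed (use C_sets in auto)
  finally show ?thesis .
qed

locale dirichlet_process_beta = prob_space M for M :: "'w measure" +
  fixes \<nu> :: "'w \<Rightarrow> real measure" and \<beta> \<theta> :: real
  assumes beta_pos: "\<beta> > 0" and theta_pos: "\<theta> > 0"
    and dirichlet_process: "dirichlet_process M \<nu> \<beta> (beta_one \<theta>)"
begin

lemma nu_measurable: "\<nu> \<in> measurable M (prob_algebra borel)"
  using dirichlet_process by (simp add: dirichlet_process_def)

lemma nu_in_prob_algebra: "\<omega> \<in> space M \<Longrightarrow> \<nu> \<omega> \<in> space (prob_algebra borel)"
  using measurable_space[OF nu_measurable] .

lemma prob_space_nu: "\<omega> \<in> space M \<Longrightarrow> prob_space (\<nu> \<omega>)"
  using nu_in_prob_algebra by (auto simp: space_prob_algebra)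

lemma sets_nu: "\<omega> \<in> space M \<Longrightarrow> sets (\<nu> \<omega>) = sets borel"
  using nu_in_prob_algebra by (auto simp: space_prob_algebra)

lemma borel_measurable_measure_nu: "A \<in> sets borel \<Longrightarrow> (\<lambda>\<omega>. measure (\<nu> \<omega>) A) \<in> borel_measurable M"
  by (rule measurable_compose[OF nu_measurable measurable_measure_prob_algebra])

lemma has_dirichlet_nu:
  assumes "0 < k" "\<And>i. i < k \<Longrightarrow> B i \<in> sets borel" "disjoint_family_on B {..<k}" "(\<Union>i<k. B i) = {0..1}"
  shows "has_dirichlet M (\<lambda>\<omega> i. measure (\<nu> \<omega>) (B i)) k (\<lambda>i. \<beta> * measure (beta_one \<theta>) (B i))"
  using dirichlet_process assms unfolding dirichlet_process_def by blast

lemma AE_measure_nu_unit: "AE \<omega> in M. measure (\<nu> \<omega>) {0..1} = 1"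
proof -
  have "measure (beta_one \<theta>) {0..1} = 1"
    using prob_space.prob_space[OF prob_space_beta_one[OF theta_pos]] measure_beta_one_Int_unit[of UNIV \<theta>]
    by simp
  hence "has_dirichlet M (\<lambda>\<omega> i. measure (\<nu> \<omega>) {0..1}) 1 (\<lambda>i. \<beta>)"
    using has_dirichlet_nu[of 1 "\<lambda>_. {0..1}"] by (simp add: disjoint_family_on_def lessThan_empty_iff)
  moreover have "{i\<in>{..<1::nat}. 0 < \<beta>} = {0}" using beta_pos by auto
  ultimately show ?thesis unfolding has_dirichlet_def Let_def by (simp only:) simp
qed

lemma measure_nu_Int_unit:
  assumes "\<omega> \<in> space M" "measure (\<nu> \<omega>) {0..1} = 1" "B \<in> sets borel"
  shows "measure (\<nu> \<omega>) (B \<inter> {0..1}) = measure (\<nu> \<omega>) B"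
proof -
  interpret nu: prob_space "\<nu> \<omega>" by (rule prob_space_nu[OF assms(1)])
  show ?thesis
    using assms sets_nu[OF assms(1)] by (intro nu.measure_space_inter) (auto simp: nu.prob_space)
qed

definition dp_moment :: "'i set \<Rightarrow> ('i \<Rightarrow> real set) \<Rightarrow> real" where
  "dp_moment I B = (\<integral>\<omega>. (\<Prod>j\<in>I. measure (\<nu> \<omega>) (B j \<inter> {0..1})) \<partial>M)"

lemma dirichlet_vector_nu_atoms:
  assumes N: "0 < N" and C_sets: "\<And>c. c < N \<Longrightarrow> C c \<in> sets borel"
    and C_disj: "disjoint_family_on C {..<N}" and C_Un: "(\<Union>c<N. C c) = {0..1}"
  shows "dirichlet_vector M (\<lambda>\<omega> c. measure (\<nu> \<omega>) (C c)) N (\<lambda>c. \<beta> * measure (beta_one \<theta>) (C c)) \<beta>"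
proof unfold_locales
  interpret beta: prob_space "beta_one \<theta>" by (rule prob_space_beta_one[OF theta_pos])
  show "has_dirichlet M (\<lambda>\<omega> c. measure (\<nu> \<omega>) (C c)) N (\<lambda>c. \<beta> * measure (beta_one \<theta>) (C c))"
    by (rule has_dirichlet_nu[OF N C_sets C_disj C_Un])
  have "(\<Sum>c<N. measure (beta_one \<theta>) (C c)) = measure (beta_one \<theta>) {0..1}"
    unfolding C_Un[symmetric] using C_sets C_disj by (intro beta.finite_measure_finite_Union[symmetric]) auto
  also have "\<dots> = 1"
    using beta.prob_space measure_beta_one_Int_unit[of UNIV \<theta>] by simp
  finally show "(\<Sum>c<N. \<beta> * measure (beta_one \<theta>) (C c)) = \<beta>"
    by (simp add: sum_distrib_left[symmetric])
  show "(\<lambda>\<omega>. measure (\<nu> \<omega>) (C c)) \<in> borel_measurable M" if "c < N" for c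
    using borel_measurable_measure_nu[OF C_sets[OF that]] .
  show "0 \<le> measure (\<nu> \<omega>) (C c) \<and> measure (\<nu> \<omega>) (C c) \<le> 1" if "\<omega> \<in> space M" for \<omega> c
    using prob_space.prob_le_1[OF prob_space_nu[OF that]] by simp
qed

lemma dp_moment_eq_sum_moment:
  assumes N: "0 < N" and C_sets: "\<And>c. c < N \<Longrightarrow> C c \<in> sets borel"
    and C_disj: "disjoint_family_on C {..<N}" and C_Un: "(\<Union>c<N. C c) = {0..1}"
    and sat: "\<And>i c. i \<in> I \<Longrightarrow> c < N \<Longrightarrow> C c \<subseteq> B i \<or> C c \<inter> B i = {}"
  shows "dp_moment I B
       = dirichlet_vector.sum_moment M (\<lambda>\<omega> c. measure (\<nu> \<omega>) (C c)) I (\<lambda>i. {c\<in>{..<N}. C c \<subseteq> B i})"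
proof -
  interpret D: dirichlet_vector M "\<lambda>\<omega> c. measure (\<nu> \<omega>) (C c)" N "\<lambda>c. \<beta> * measure (beta_one \<theta>) (C c)" \<beta>
    by (rule dirichlet_vector_nu_atoms[OF N C_sets C_disj C_Un])
  show ?thesis
    unfolding dp_moment_def D.sum_moment_def
  proof (intro Bochner_Integration.integral_cong refl prod.cong)
    fix \<omega> i assume \<omega>: "\<omega> \<in> space M" and i: "i \<in> I"
    interpret nu: prob_space "\<nu> \<omega>" by (rule prob_space_nu[OF \<omega>])
    show "measure (\<nu> \<omega>) (B i \<inter> {0..1}) = (\<Sum>c\<in>{c\<in>{..<N}. C c \<subseteq> B i}. measure (\<nu> \<omega>) (C c))"
      using C_sets sets_nu[OF \<omega>] by (intro nu.measure_Int_eq_sum_atoms[OF C_Un _ C_disj sat[OF i]]) auto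
  qed
qed

text \<open>Refine the sets \<open>B j\<close> to the atoms of the algebra they generate: the \<open>\<nu>\<close>-masses of
  the atoms form a Dirichlet vector, whose moments obey the Polya urn recursion.\<close>
lemma dp_moment_insert:
  assumes I: "finite I" "x \<notin> I" and B: "\<And>j. B j \<in> sets borel"
  shows "(\<beta> + card I) * dp_moment (insert x I) B
       = \<beta> * measure (beta_one \<theta>) (B x) * dp_moment I B + (\<Sum>j\<in>I. dp_moment I (B(j := B j \<inter> B x)))"
proof -
  have "finite (insert x I)" "insert x I \<noteq> {}" "\<And>j. j \<in> insert x I \<Longrightarrow> B j \<in> sets borel"
    "{0..1::real} \<in> sets borel"
    using I B by (auto simp: atLeastAtMost_borel)
  then obtain N :: nat and C :: "nat \<Rightarrow> real set" where N: "0 < N" and C_sets: "\<And>c. c < N \<Longrightarrow> C c \<in> sets borel"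
    and C_disj: "disjoint_family_on C {..<N}" and C_Un: "(\<Union>c<N. C c) = {0..1}"
    and C_sat: "\<And>c j. c < N \<Longrightarrow> j \<in> insert x I \<Longrightarrow> C c \<subseteq> B j \<or> C c \<inter> B j = {}"
    using finite_atoms by metis
  define J where "J A = {c\<in>{..<N}. C c \<subseteq> A}" for A
  interpret beta: prob_space "beta_one \<theta>" by (rule prob_space_beta_one[OF theta_pos])
  interpret D: dirichlet_vector M "\<lambda>\<omega> c. measure (\<nu> \<omega>) (C c)" N "\<lambda>c. \<beta> * measure (beta_one \<theta>) (C c)" \<beta>
    by (rule dirichlet_vector_nu_atoms[OF N C_sets C_disj C_Un])
  have moment_eq: "dp_moment I' B' = D.sum_moment I' (\<lambda>i. J (B' i))"
    if "\<And>i c. i \<in> I' \<Longrightarrow> c < N \<Longrightarrow> C c \<subseteq> B' i \<or> C c \<inter> B' i = {}" for I' B'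
    unfolding J_def by (rule dp_moment_eq_sum_moment[OF N C_sets C_disj C_Un that])
  have J_sub: "J A \<subseteq> {..<N}" for A by (auto simp: J_def)
  have "dp_moment (insert x I) B = D.sum_moment (insert x I) (\<lambda>i. J (B i))"
    by (rule moment_eq, rule C_sat)
  then have "(\<beta> + card I) * dp_moment (insert x I) B
      = (\<Sum>c\<in>J (B x). \<beta> * measure (beta_one \<theta>) (C c)) * D.sum_moment I (\<lambda>i. J (B i))
        + (\<Sum>j\<in>I. D.sum_moment I ((\<lambda>i. J (B i))(j := J (B j) \<inter> J (B x))))"
    using D.sum_moment_insert[OF I J_sub] by simp
  also have "(\<Sum>c\<in>J (B x). \<beta> * measure (beta_one \<theta>) (C c)) = \<beta> * measure (beta_one \<theta>) (B x)"
    using beta.measure_Int_eq_sum_atoms[OF C_Un _ C_disj, of "B x"]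
      C_sets C_sat measure_beta_one_Int_unit[OF B]
    by (simp add: J_def sum_distrib_left)
  also have "D.sum_moment I (\<lambda>i. J (B i)) = dp_moment I B"
    by (rule moment_eq[symmetric], rule C_sat) simp_all
  also have "(\<Sum>j\<in>I. D.sum_moment I ((\<lambda>i. J (B i))(j := J (B j) \<inter> J (B x))))
      = (\<Sum>j\<in>I. dp_moment I (B(j := B j \<inter> B x)))"
  proof (rule sum.cong[OF refl])
    fix j assume j: "j \<in> I"
    have "(\<lambda>i. J (B i))(j := J (B j) \<inter> J (B x)) = (\<lambda>i. J ((B(j := B j \<inter> B x)) i))"
      by (rule ext) (auto simp: J_def)
    moreover have "C c \<subseteq> (B(j := B j \<inter> B x)) i \<or> C c \<inter> (B(j := B j \<inter> B x)) i = {}"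
      if "i \<in> I" "c < N" for i c
      using C_sat[of c i] C_sat[of c j] C_sat[of c x] that j by (cases "i = j") (simp_all, blast)
    ultimately show "D.sum_moment I ((\<lambda>i. J (B i))(j := J (B j) \<inter> J (B x))) = dp_moment I (B(j := B j \<inter> B x))"
      by (simp add: moment_eq)
  qed
  finally show ?thesis .
qed

lemma dp_moment_eq_ewens_sum:
  assumes "finite I" "\<And>j. B j \<in> sets borel"
  shows "pochhammer \<beta> (card I) * dp_moment I B = ewens_sum (\<lambda>A. \<beta> * measure (beta_one \<theta>) (\<Inter>j\<in>A. B j)) I"
  using assms
proof (induction I arbitrary: B rule: finite_induct)
  case empty
  show ?case by (simp add: dp_moment_def prob_space)
next
  case (insert x I)
  let ?h = "\<lambda>B A. \<beta> * measure (beta_one \<theta>) (\<Inter>j\<in>A. B j)"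
  have h_upd: "?h (B(j := B j \<inter> B x)) = (\<lambda>A. if j \<in> A then ?h B (insert x A) else ?h B A)" for j
  proof
    fix A
    have "(\<Inter>i\<in>A. (B(j := B j \<inter> B x)) i) = (if j \<in> A then (\<Inter>i\<in>insert x A. B i) else (\<Inter>i\<in>A. B i))"
      by auto
    then show "?h (B(j := B j \<inter> B x)) A = (if j \<in> A then ?h B (insert x A) else ?h B A)"
      by simp
  qed
  have "pochhammer \<beta> (card (insert x I)) * dp_moment (insert x I) B
      = pochhammer \<beta> (card I) * ((\<beta> + card I) * dp_moment (insert x I) B)"
    using insert.hyps by (simp add: pochhammer_Suc mult_ac)
  also have "\<dots> = ?h B {x} * (pochhammer \<beta> (card I) * dp_moment I B)
      + (\<Sum>j\<in>I. pochhammer \<beta> (card I) * dp_moment I (B(j := B j \<inter> B x)))"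
    by (subst dp_moment_insert[OF insert.hyps insert.prems]) (simp add: algebra_simps sum_distrib_left)
  also have "\<dots> = ?h B {x} * ewens_sum (?h B) I + (\<Sum>j\<in>I. ewens_sum (\<lambda>A. if j \<in> A then ?h B (insert x A) else ?h B A) I)"
    using insert.prems by (simp add: insert.IH h_upd[symmetric])
  also have "\<dots> = ewens_sum (?h B) (insert x I)"
    by (rule ewens_sum_insert[symmetric, OF insert.hyps])
  finally show ?case .
qed

end

section \<open>Ewens partitions with Beta distributed blocks\<close>

definition block_of :: "'i set set \<Rightarrow> 'i \<Rightarrow> 'i set" where
  "block_of P j = (THE A. A \<in> P \<and> j \<in> A)"

lemma block_of_eq:
  assumes "partition_on K P" "A \<in> P" "j \<in> A"
  shows "block_of P j = A"
  unfolding block_of_def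
proof (rule the_equality)
  show "A \<in> P \<and> j \<in> A" using assms by auto
  fix A' assume "A' \<in> P \<and> j \<in> A'"
  thus "A' = A" using assms partition_onD2[OF assms(1)] by (auto simp: disjoint_def)
qed

lemma block_of_in:
  assumes "partition_on K P" "j \<in> K"
  shows "block_of P j \<in> P" "j \<in> block_of P j"
proof -
  obtain A where "A \<in> P" "j \<in> A" using partition_onD1[OF assms(1)] assms(2) by auto
  thus "block_of P j \<in> P" "j \<in> block_of P j" using block_of_eq[OF assms(1)] by auto
qed

definition block_vector :: "'i set \<Rightarrow> 'i set set \<Rightarrow> ('i set \<Rightarrow> 'a) \<Rightarrow> 'i \<Rightarrow> 'a" where
  "block_vector K P y = (\<lambda>j\<in>K. y (block_of P j))"

lemma measurable_block_vector:
  assumes "partition_on K P" "sets N = sets N'"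
  shows "block_vector K P \<in> measurable (Pi\<^sub>M P (\<lambda>_. N)) (Pi\<^sub>M K (\<lambda>_. N'))"
  unfolding block_vector_def
proof (rule measurable_restrict)
  fix j assume "j \<in> K"
  then have "(\<lambda>y. y (block_of P j)) \<in> measurable (Pi\<^sub>M P (\<lambda>_. N)) N"
    by (intro measurable_component_singleton block_of_in[OF assms(1)])
  then show "(\<lambda>y. y (block_of P j)) \<in> measurable (Pi\<^sub>M P (\<lambda>_. N)) N'"
    using assms(2) by (simp cong: measurable_cong_sets)
qed

lemma block_vector_vimage_PiE:
  assumes "partition_on K P"
  shows "block_vector K P -` Pi\<^sub>E K B \<inter> space (Pi\<^sub>M P (\<lambda>_. N)) = Pi\<^sub>E P (\<lambda>A. (\<Inter>j\<in>A. B j) \<inter> space N)"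
proof (intro equalityI subsetI)
  fix y assume y: "y \<in> block_vector K P -` Pi\<^sub>E K B \<inter> space (Pi\<^sub>M P (\<lambda>_. N))"
  have "y A \<in> B j" if "A \<in> P" "j \<in> A" for A j
  proof -
    have "j \<in> K" using partition_onD1[OF assms] that by auto
    hence "block_vector K P y j \<in> B j" using y by (auto simp: PiE_def Pi_def)
    thus ?thesis using block_of_eq[OF assms that] \<open>j \<in> K\<close> by (simp add: block_vector_def)
  qed
  with y show "y \<in> Pi\<^sub>E P (\<lambda>A. (\<Inter>j\<in>A. B j) \<inter> space N)" by (auto simp: space_PiM PiE_def Pi_def)
next
  fix y assume y: "y \<in> Pi\<^sub>E P (\<lambda>A. (\<Inter>j\<in>A. B j) \<inter> space N)"
  have "y (block_of P j) \<in> B j" if "j \<in> K" for j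
    using y block_of_in[OF assms that] by (auto simp: PiE_def Pi_def)
  hence "block_vector K P y \<in> Pi\<^sub>E K B" by (auto simp: block_vector_def PiE_def Pi_def)
  moreover have "y \<in> space (Pi\<^sub>M P (\<lambda>_. N))" using y by (auto simp: space_PiM PiE_def Pi_def)
  ultimately show "y \<in> block_vector K P -` Pi\<^sub>E K B \<inter> space (Pi\<^sub>M P (\<lambda>_. N))" by auto
qed

text \<open>Pick a partition \<open>P\<close> of \<open>K\<close> with the Ewens weights, then give all indices in a block
  of \<open>P\<close> one common value, independently Beta(1,\<open>\<theta>\<close>) distributed across blocks.\<close>
definition ewens_beta_mixture :: "real \<Rightarrow> real \<Rightarrow> 'i set \<Rightarrow> ('i \<Rightarrow> real) measure" where
  "ewens_beta_mixture \<beta> \<theta> K = density (count_space {P. partition_on K P}) (\<lambda>P. ennreal (ewens_weight \<beta> K P))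
      \<bind> (\<lambda>P. distr (Pi\<^sub>M P (\<lambda>_. beta_one \<theta>)) (Pi\<^sub>M K (\<lambda>_. borel)) (block_vector K P))"

lemma partitions_nonempty: "{P. partition_on K P} \<noteq> {}"
proof (cases "K = {}")
  case False
  thus ?thesis using partition_on_space[OF False] by auto
qed (auto simp: partition_on_empty)

lemma measurable_ewens_beta_kernel:
  assumes "\<theta> > 0"
  shows "(\<lambda>P. distr (Pi\<^sub>M P (\<lambda>_. beta_one \<theta>)) (Pi\<^sub>M K (\<lambda>_. borel)) (block_vector K P))
    \<in> measurable (density (count_space {P. partition_on K P}) (\<lambda>P. ennreal (ewens_weight \<beta> K P)))
         (subprob_algebra (Pi\<^sub>M K (\<lambda>_. borel)))"
proof -
  have "(\<lambda>P. distr (Pi\<^sub>M P (\<lambda>_. beta_one \<theta>)) (Pi\<^sub>M K (\<lambda>_. borel)) (block_vector K P))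
    \<in> measurable (count_space {P. partition_on K P}) (subprob_algebra (Pi\<^sub>M K (\<lambda>_. borel)))"
  proof (subst measurable_count_space_eq1, rule Pi_I)
    fix P assume "P \<in> {P. partition_on K P}"
    hence P: "partition_on K P" by simp
    interpret prob_space "Pi\<^sub>M P (\<lambda>_. beta_one \<theta>)"
      by (rule prob_space_PiM) (rule prob_space_beta_one[OF assms])
    have "prob_space (distr (Pi\<^sub>M P (\<lambda>_. beta_one \<theta>)) (Pi\<^sub>M K (\<lambda>_. borel)) (block_vector K P))"
      by (rule prob_space_distr)
        (rule measurable_block_vector[OF P sets_beta_one])
    thus "distr (Pi\<^sub>M P (\<lambda>_. beta_one \<theta>)) (Pi\<^sub>M K (\<lambda>_. borel)) (block_vector K P) \<in> space (subprob_algebra (Pi\<^sub>M K (\<lambda>_. borel)))"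
      by (auto simp: space_subprob_algebra prob_space_imp_subprob_space)
  qed
  thus ?thesis by (simp cong: measurable_cong_sets)
qed

lemma sets_ewens_beta_mixture: "sets (ewens_beta_mixture \<beta> \<theta> K) = sets (Pi\<^sub>M K (\<lambda>_. borel))"
  unfolding ewens_beta_mixture_def by (rule sets_bind) (use partitions_nonempty in auto)

lemma nn_integral_ewens_beta_mixture:
  assumes \<theta>: "\<theta> > 0" and K: "finite K" and F: "F \<in> borel_measurable (Pi\<^sub>M K (\<lambda>_. borel))"
  shows "(\<integral>\<^sup>+z. F z \<partial>ewens_beta_mixture \<beta> \<theta> K)
       = (\<Sum>P | partition_on K P. ennreal (ewens_weight \<beta> K P) * (\<integral>\<^sup>+y. F (block_vector K P y) \<partial>Pi\<^sub>M P (\<lambda>_. beta_one \<theta>)))"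
proof -
  have "(\<integral>\<^sup>+z. F z \<partial>ewens_beta_mixture \<beta> \<theta> K)
      = (\<integral>\<^sup>+P. (\<integral>\<^sup>+z. F z \<partial>distr (Pi\<^sub>M P (\<lambda>_. beta_one \<theta>)) (Pi\<^sub>M K (\<lambda>_. borel)) (block_vector K P))
           \<partial>density (count_space {P. partition_on K P}) (\<lambda>P. ennreal (ewens_weight \<beta> K P)))"
    unfolding ewens_beta_mixture_def by (rule nn_integral_bind[OF F measurable_ewens_beta_kernel[OF \<theta>]])
  also have "\<dots> = (\<Sum>P | partition_on K P. ennreal (ewens_weight \<beta> K P)
                    * (\<integral>\<^sup>+z. F z \<partial>distr (Pi\<^sub>M P (\<lambda>_. beta_one \<theta>)) (Pi\<^sub>M K (\<lambda>_. borel)) (block_vector K P)))"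
    by (simp add: nn_integral_density nn_integral_count_space_finite K finitely_many_partition_on)
  also have "\<dots> = (\<Sum>P | partition_on K P. ennreal (ewens_weight \<beta> K P) * (\<integral>\<^sup>+y. F (block_vector K P y) \<partial>Pi\<^sub>M P (\<lambda>_. beta_one \<theta>)))"
    using F by (intro sum.cong refl) (simp add: nn_integral_distr measurable_block_vector)
  finally show ?thesis .
qed

lemma emeasure_ewens_beta_mixture_PiE:
  assumes \<theta>: "\<theta> > 0" and K: "finite K" and B: "\<And>j. B j \<in> sets borel"
  shows "emeasure (ewens_beta_mixture \<beta> \<theta> K) (Pi\<^sub>E K B)
       = (\<Sum>P | partition_on K P. ennreal (ewens_weight \<beta> K P) * (\<Prod>A\<in>P. emeasure (beta_one \<theta>) (\<Inter>j\<in>A. B j)))"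
proof -
  have box: "Pi\<^sub>E K B \<in> sets (Pi\<^sub>M K (\<lambda>_. borel))" using B K by (intro sets_PiM_I_finite) auto
  have "emeasure (ewens_beta_mixture \<beta> \<theta> K) (Pi\<^sub>E K B) = (\<integral>\<^sup>+z. indicator (Pi\<^sub>E K B) z \<partial>ewens_beta_mixture \<beta> \<theta> K)"
    using box by (simp add: sets_ewens_beta_mixture)
  also have "\<dots> = (\<Sum>P | partition_on K P. ennreal (ewens_weight \<beta> K P)
                    * (\<integral>\<^sup>+y. indicator (Pi\<^sub>E K B) (block_vector K P y) \<partial>Pi\<^sub>M P (\<lambda>_. beta_one \<theta>)))"
    using box by (intro nn_integral_ewens_beta_mixture[OF \<theta> K]) simp
  also have "\<dots> = (\<Sum>P | partition_on K P. ennreal (ewens_weight \<beta> K P) * (\<Prod>A\<in>P. emeasure (beta_one \<theta>) (\<Inter>j\<in>A. B j)))"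
  proof (intro sum.cong refl arg_cong2[where f="(*)"])
    fix P assume "P \<in> {P. partition_on K P}"
    hence P: "partition_on K P" by simp
    interpret product_sigma_finite "\<lambda>_::'a set. beta_one \<theta>"
      unfolding product_sigma_finite_def using prob_space_beta_one[OF \<theta>] by (simp add: prob_space_imp_sigma_finite)
    have "(\<integral>\<^sup>+y. indicator (Pi\<^sub>E K B) (block_vector K P y) \<partial>Pi\<^sub>M P (\<lambda>_. beta_one \<theta>))
        = emeasure (Pi\<^sub>M P (\<lambda>_. beta_one \<theta>)) (block_vector K P -` Pi\<^sub>E K B \<inter> space (Pi\<^sub>M P (\<lambda>_. beta_one \<theta>)))"
      unfolding indicator_vimage[symmetric]
      by (rule nn_integral_indicator'[OF measurable_sets[OF measurable_block_vector[OF P sets_beta_one] box]])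
    also have "\<dots> = (\<Prod>A\<in>P. emeasure (beta_one \<theta>) (\<Inter>j\<in>A. B j))"
      unfolding block_vector_vimage_PiE[OF P]
    proof (subst emeasure_PiM[OF finite_elements[OF K P]])
      fix A assume "A \<in> P"
      then have "finite A" using K partition_onD1[OF P] by (meson Union_upper finite_subset)
      then show "(\<Inter>j\<in>A. B j) \<inter> space (beta_one \<theta>) \<in> sets (beta_one \<theta>)"
        by (auto intro!: sets.countable_INT'' B countable_finite)
    qed simp
    finally show "(\<integral>\<^sup>+y. indicator (Pi\<^sub>E K B) (block_vector K P y) \<partial>Pi\<^sub>M P (\<lambda>_. beta_one \<theta>))
        = (\<Prod>A\<in>P. emeasure (beta_one \<theta>) (\<Inter>j\<in>A. B j))" .
  qed
  finally show ?thesis .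
qed

lemma nn_integral_prod_ewens_beta_mixture:
  fixes f :: "'i \<Rightarrow> real \<Rightarrow> real"
  assumes \<theta>: "\<theta> > 0" and K: "finite K"
    and f_nonneg: "\<And>j t. 0 \<le> f j t" and f_meas [measurable]: "\<And>j. f j \<in> borel_measurable borel"
  shows "(\<integral>\<^sup>+z. ennreal (\<Prod>j\<in>K. f j (z j)) \<partial>ewens_beta_mixture \<beta> \<theta> K)
       = (\<Sum>P | partition_on K P. ennreal (ewens_weight \<beta> K P) * (\<Prod>A\<in>P. \<integral>\<^sup>+t. ennreal (\<Prod>j\<in>A. f j t) \<partial>beta_one \<theta>))"
proof -
  have "(\<lambda>z. ennreal (\<Prod>j\<in>K. f j (z j))) \<in> borel_measurable (Pi\<^sub>M K (\<lambda>_. borel))"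
    using K by measurable
  then have "(\<integral>\<^sup>+z. ennreal (\<Prod>j\<in>K. f j (z j)) \<partial>ewens_beta_mixture \<beta> \<theta> K)
      = (\<Sum>P | partition_on K P. ennreal (ewens_weight \<beta> K P)
           * (\<integral>\<^sup>+y. ennreal (\<Prod>j\<in>K. f j (block_vector K P y j)) \<partial>Pi\<^sub>M P (\<lambda>_. beta_one \<theta>)))"
    by (rule nn_integral_ewens_beta_mixture[OF \<theta> K])
  also have "\<dots> = (\<Sum>P | partition_on K P. ennreal (ewens_weight \<beta> K P) * (\<Prod>A\<in>P. \<integral>\<^sup>+t. ennreal (\<Prod>j\<in>A. f j t) \<partial>beta_one \<theta>))"
  proof (intro sum.cong refl arg_cong2[where f="(*)"])
    fix P assume "P \<in> {P. partition_on K P}"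
    hence P: "partition_on K P" by simp
    have finA: "finite A" if "A \<in> P" for A
      using that K partition_onD1[OF P] by (meson Union_upper finite_subset)
    interpret product_sigma_finite "\<lambda>_::'i set. beta_one \<theta>"
      unfolding product_sigma_finite_def using prob_space_beta_one[OF \<theta>] by (simp add: prob_space_imp_sigma_finite)
    have "(\<Prod>j\<in>K. f j (block_vector K P y j)) = (\<Prod>A\<in>P. \<Prod>j\<in>A. f j (y A))" for y
    proof -
      have "(\<Prod>j\<in>K. f j (block_vector K P y j)) = (\<Prod>j\<in>\<Union>P. f j (y (block_of P j)))"
        unfolding partition_onD1[OF P] by (intro prod.cong refl) (simp add: block_vector_def)
      also have "\<dots> = (\<Prod>A\<in>P. \<Prod>j\<in>A. f j (y (block_of P j)))"
        using finA partition_onD2[OF P]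
        by (intro prod.Union_disjoint[unfolded o_def]) (auto simp: disjoint_def)
      also have "\<dots> = (\<Prod>A\<in>P. \<Prod>j\<in>A. f j (y A))"
        by (intro prod.cong refl) (simp add: block_of_eq[OF P])
      finally show ?thesis .
    qed
    then have "(\<integral>\<^sup>+y. ennreal (\<Prod>j\<in>K. f j (block_vector K P y j)) \<partial>Pi\<^sub>M P (\<lambda>_. beta_one \<theta>))
        = (\<integral>\<^sup>+y. (\<Prod>A\<in>P. ennreal (\<Prod>j\<in>A. f j (y A))) \<partial>Pi\<^sub>M P (\<lambda>_. beta_one \<theta>))"
      by (simp add: prod_ennreal prod_nonneg f_nonneg)
    also have "\<dots> = (\<Prod>A\<in>P. \<integral>\<^sup>+t. ennreal (\<Prod>j\<in>A. f j t) \<partial>beta_one \<theta>)"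
      by (rule product_nn_integral_prod[OF finite_elements[OF K P]]) measurable
    finally show "(\<integral>\<^sup>+y. ennreal (\<Prod>j\<in>K. f j (block_vector K P y j)) \<partial>Pi\<^sub>M P (\<lambda>_. beta_one \<theta>))
        = (\<Prod>A\<in>P. \<integral>\<^sup>+t. ennreal (\<Prod>j\<in>A. f j t) \<partial>beta_one \<theta>)" .
  qed
  finally show ?thesis .
qed

section \<open>Law of the sticks\<close>

locale dirichlet_stick_breaking = dirichlet_process_beta M \<nu> \<beta> \<theta> for M :: "'w measure" and \<nu> \<beta> \<theta> +
  fixes v :: "'w \<Rightarrow> nat \<Rightarrow> real"
  assumes v_measurable: "\<And>i. (\<lambda>\<omega>. v \<omega> i) \<in> borel_measurable M"
    and v_ciid: "\<And>A N B. A \<in> sets (prob_algebra borel) \<Longrightarrow> (\<And>i. B i \<in> sets borel) \<Longrightarrow>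
        measure M {\<omega> \<in> space M. \<nu> \<omega> \<in> A \<and> (\<forall>i\<in>{1..N}. v \<omega> i \<in> B i)}
          = (\<integral>\<omega>. indicator A (\<nu> \<omega>) * (\<Prod>i\<in>{1..N}. measure (\<nu> \<omega>) (B i)) \<partial>M)"
begin

lemma prob_v_in_box_eq_dp_moment:
  assumes B: "\<And>j. B j \<in> sets borel"
  shows "measure M {\<omega>\<in>space M. \<forall>j\<in>{1..k}. v \<omega> j \<in> B j} = dp_moment {1..k} B"
proof -
  have "measure M {\<omega>\<in>space M. \<forall>j\<in>{1..k}. v \<omega> j \<in> B j}
      = measure M {\<omega>\<in>space M. \<nu> \<omega> \<in> space (prob_algebra borel) \<and> (\<forall>j\<in>{1..k}. v \<omega> j \<in> B j)}"
    using nu_in_prob_algebra by (intro arg_cong[where f="measure M"]) auto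
  also have "\<dots> = (\<integral>\<omega>. indicator (space (prob_algebra borel)) (\<nu> \<omega>) * (\<Prod>j\<in>{1..k}. measure (\<nu> \<omega>) (B j)) \<partial>M)"
    by (rule v_ciid) (auto intro: B)
  also have "\<dots> = dp_moment {1..k} B"
    unfolding dp_moment_def
  proof (rule integral_cong_AE)
    show "(\<lambda>\<omega>. indicator (space (prob_algebra borel)) (\<nu> \<omega>) * (\<Prod>j\<in>{1..k}. measure (\<nu> \<omega>) (B j)))
        \<in> borel_measurable M"
      using nu_measurable B by (intro borel_measurable_times borel_measurable_prod borel_measurable_measure_nu)
        (auto intro: borel_measurable_indicator measurable_compose)
    show "(\<lambda>\<omega>. \<Prod>j\<in>{1..k}. measure (\<nu> \<omega>) (B j \<inter> {0..1})) \<in> borel_measurable M"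
      using B by (intro borel_measurable_prod borel_measurable_measure_nu) auto
    show "AE \<omega> in M. indicator (space (prob_algebra borel)) (\<nu> \<omega>) * (\<Prod>j\<in>{1..k}. measure (\<nu> \<omega>) (B j))
        = (\<Prod>j\<in>{1..k}. measure (\<nu> \<omega>) (B j \<inter> {0..1}))"
      using AE_measure_nu_unit AE_space
      by eventually_elim (simp add: nu_in_prob_algebra measure_nu_Int_unit B)
  qed
  finally show ?thesis .
qed

lemma prob_v_in_box:
  assumes "\<And>j. B j \<in> sets borel"
  shows "measure M {\<omega>\<in>space M. \<forall>j\<in>{1..k}. v \<omega> j \<in> B j}
       = ewens_sum (\<lambda>A. \<beta> * measure (beta_one \<theta>) (\<Inter>j\<in>A. B j)) {1..k} / pochhammer \<beta> k"
  unfolding prob_v_in_box_eq_dp_moment[OF assms]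
  using dp_moment_eq_ewens_sum[of "{1..k}" B] pochhammer_pos[OF beta_pos, of k] assms
  by (simp add: field_simps)

lemma AE_v_unit:
  assumes "1 \<le> j"
  shows "AE \<omega> in M. v \<omega> j \<in> {0..1}"
proof -
  define B where "B i = (if i = j then - {0..1} else (UNIV :: real set))" for i
  have "measure M {\<omega>\<in>space M. \<forall>i\<in>{1..j}. v \<omega> i \<in> B i} = dp_moment {1..j} B"
    by (rule prob_v_in_box_eq_dp_moment) (auto simp: B_def)
  also have "\<dots> = 0"
  proof -
    have zero: "(\<Prod>i\<in>{1..j}. measure (\<nu> \<omega>) (B i \<inter> {0..1})) = 0" for \<omega>
      using assms by (intro prod_zero bexI[of _ j]) (auto simp: B_def)
    show ?thesis unfolding dp_moment_def zero by simp
  qed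
  also have "{\<omega>\<in>space M. \<forall>i\<in>{1..j}. v \<omega> i \<in> B i} = {\<omega>\<in>space M. v \<omega> j \<notin> {0..1}}"
    using assms by (auto simp: B_def)
  finally show ?thesis
    using v_measurable[of j] by (subst AE_iff_measurable[OF _ refl]) (auto simp: emeasure_eq_measure)
qed

lemma distr_v_eq_ewens_beta_mixture:
  "distr M (Pi\<^sub>M {1..k} (\<lambda>_. borel)) (\<lambda>\<omega>. restrict (v \<omega>) {1..k}) = ewens_beta_mixture \<beta> \<theta> {1..k}"
  (is "?D = _")
proof (rule measure_eqI_PiM_finite[where A="\<lambda>_. space (Pi\<^sub>M {1..k} (\<lambda>_. borel))"])
  have v_meas: "(\<lambda>\<omega>. restrict (v \<omega>) {1..k}) \<in> measurable M (Pi\<^sub>M {1..k} (\<lambda>_. borel))"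
    by (rule measurable_restrict) (rule v_measurable)
  show "sets (ewens_beta_mixture \<beta> \<theta> {1..k}) = sets (Pi\<^sub>M {1..k} (\<lambda>_. borel))"
    by (rule sets_ewens_beta_mixture)
  show "range (\<lambda>_. space (Pi\<^sub>M {1..k} (\<lambda>_. borel))) \<subseteq> prod_algebra {1..k} (\<lambda>_. borel)"
    by (auto simp: space_PiM intro!: prod_algebraI_finite)
  show "emeasure ?D (space (Pi\<^sub>M {1..k} (\<lambda>_. borel))) \<noteq> \<infinity>"
    using prob_space.emeasure_space_1[OF prob_space_distr[OF v_meas]] by simp
  fix A :: "nat \<Rightarrow> real set" assume A: "\<And>i. i \<in> {1..k} \<Longrightarrow> A i \<in> sets borel"
  define B where "B j = (if j \<in> {1..k} then A j else UNIV)" for j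
  have B: "B j \<in> sets borel" for j using A by (auto simp: B_def)
  have box: "Pi\<^sub>E {1..k} A = Pi\<^sub>E {1..k} B" by (auto simp: B_def PiE_def Pi_def)
  interpret beta: prob_space "beta_one \<theta>" by (rule prob_space_beta_one[OF theta_pos])
  have "emeasure ?D (Pi\<^sub>E {1..k} B) = emeasure M {\<omega>\<in>space M. \<forall>j\<in>{1..k}. v \<omega> j \<in> B j}"
    using B by (subst emeasure_distr[OF v_meas]) (auto intro!: arg_cong[where f="emeasure M"] sets_PiM_I_finite simp: Pi_def)
  also have "\<dots> = ennreal (\<Sum>P | partition_on {1..k} P. ewens_weight \<beta> {1..k} P * (\<Prod>A\<in>P. measure (beta_one \<theta>) (\<Inter>j\<in>A. B j)))"
    by (simp only: emeasure_eq_measure prob_v_in_box[OF B] ewens_sum_divide[symmetric]) simp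
  also have "\<dots> = (\<Sum>P | partition_on {1..k} P. ennreal (ewens_weight \<beta> {1..k} P) * (\<Prod>A\<in>P. emeasure (beta_one \<theta>) (\<Inter>j\<in>A. B j)))"
  proof -
    have "ennreal (ewens_weight \<beta> {1..k} P * (\<Prod>A\<in>P. measure (beta_one \<theta>) (\<Inter>j\<in>A. B j)))
        = ennreal (ewens_weight \<beta> {1..k} P) * (\<Prod>A\<in>P. emeasure (beta_one \<theta>) (\<Inter>j\<in>A. B j))" for P
      by (subst ennreal_mult)
        (auto intro: prod_nonneg ewens_weight_nonneg[OF beta_pos] simp: prod_ennreal beta.emeasure_eq_measure)
    then show ?thesis
      by (subst sum_ennreal[symmetric]) (auto intro!: mult_nonneg_nonneg prod_nonneg ewens_weight_nonneg beta_pos)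
  qed
  also have "\<dots> = emeasure (ewens_beta_mixture \<beta> \<theta> {1..k}) (Pi\<^sub>E {1..k} B)"
    by (rule emeasure_ewens_beta_mixture_PiE[OF theta_pos _ B, symmetric]) simp
  finally show "emeasure ?D (Pi\<^sub>E {1..k} A) = emeasure (ewens_beta_mixture \<beta> \<theta> {1..k}) (Pi\<^sub>E {1..k} A)"
    unfolding box .
qed simp_all

lemma nn_integral_prod_v:
  fixes f :: "nat \<Rightarrow> real \<Rightarrow> real"
  assumes f_nonneg: "\<And>j t. 0 \<le> f j t" and f_meas [measurable]: "\<And>j. f j \<in> borel_measurable borel"
  shows "(\<integral>\<^sup>+\<omega>. ennreal (\<Prod>j\<in>{1..k}. f j (v \<omega> j)) \<partial>M)
    = (\<Sum>P | partition_on {1..k} P. ennreal (ewens_weight \<beta> {1..k} P) * (\<Prod>A\<in>P. \<integral>\<^sup>+t. ennreal (\<Prod>j\<in>A. f j t) \<partial>beta_one \<theta>))"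
proof -
  have "(\<lambda>\<omega>. restrict (v \<omega>) {1..k}) \<in> measurable M (Pi\<^sub>M {1..k} (\<lambda>_. borel))"
    by (rule measurable_restrict) (rule v_measurable)
  moreover have "(\<lambda>z. ennreal (\<Prod>j\<in>{1..k}. f j (z j))) \<in> borel_measurable (Pi\<^sub>M {1..k} (\<lambda>_. borel))"
    by measurable
  ultimately have "(\<integral>\<^sup>+\<omega>. ennreal (\<Prod>j\<in>{1..k}. f j (v \<omega> j)) \<partial>M)
      = (\<integral>\<^sup>+z. ennreal (\<Prod>j\<in>{1..k}. f j (z j)) \<partial>distr M (Pi\<^sub>M {1..k} (\<lambda>_. borel)) (\<lambda>\<omega>. restrict (v \<omega>) {1..k}))"
    by (simp add: nn_integral_distr)
  also have "\<dots> = (\<integral>\<^sup>+z. ennreal (\<Prod>j\<in>{1..k}. f j (z j)) \<partial>ewens_beta_mixture \<beta> \<theta> {1..k})"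
    by (simp only: distr_v_eq_ewens_beta_mixture)
  also have "\<dots> = (\<Sum>P | partition_on {1..k} P. ennreal (ewens_weight \<beta> {1..k} P)
                    * (\<Prod>A\<in>P. \<integral>\<^sup>+t. ennreal (\<Prod>j\<in>A. f j t) \<partial>beta_one \<theta>))"
    by (rule nn_integral_prod_ewens_beta_mixture[OF theta_pos]) (use f_nonneg f_meas in auto)
  finally show ?thesis .
qed

lemma nn_integral_v_monomial:
  "(\<integral>\<^sup>+\<omega>. ennreal (\<Prod>j\<in>{1..k}. indicator {0..1} (v \<omega> j) * v \<omega> j ^ r j * (1 - v \<omega> j) ^ t j) \<partial>M)
     = ennreal (\<Sum>P | partition_on {1..k} P. ewens_weight \<beta> {1..k} P
         * (\<Prod>A\<in>P. \<theta> * fact (\<Sum>j\<in>A. r j) / pochhammer (\<theta> + real (\<Sum>j\<in>A. t j)) (Suc (\<Sum>j\<in>A. r j))))"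
    (is "_ = ennreal (\<Sum>P | _. _ * ?g P)")
proof -
  have g_nonneg: "0 \<le> ?g P" for P
    using theta_pos by (intro prod_nonneg divide_nonneg_nonneg mult_nonneg_nonneg less_imp_le[OF pochhammer_pos]
        add_pos_nonneg) (auto intro: sum_nonneg)
  have "(\<integral>\<^sup>+\<omega>. ennreal (\<Prod>j\<in>{1..k}. indicator {0..1} (v \<omega> j) * v \<omega> j ^ r j * (1 - v \<omega> j) ^ t j) \<partial>M)
      = (\<Sum>P | partition_on {1..k} P. ennreal (ewens_weight \<beta> {1..k} P)
           * (\<Prod>A\<in>P. \<integral>\<^sup>+y. ennreal (\<Prod>j\<in>A. indicator {0..1} y * y ^ r j * (1 - y) ^ t j) \<partial>beta_one \<theta>))"
    by (rule nn_integral_prod_v) (auto simp: indicator_def)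
  also have "\<dots> = (\<Sum>P | partition_on {1..k} P. ennreal (ewens_weight \<beta> {1..k} P * ?g P))"
    by (intro sum.cong refl)
      (simp only: mem_Collect_eq prod_nn_integral_beta_one_blocks[OF theta_pos finite_atLeastAtMost]
        ennreal_mult'[OF ewens_weight_nonneg[OF beta_pos]])
  also have "\<dots> = ennreal (\<Sum>P | partition_on {1..k} P. ewens_weight \<beta> {1..k} P * ?g P)"
    by (intro sum_ennreal mult_nonneg_nonneg[OF ewens_weight_nonneg[OF beta_pos] g_nonneg])
  finally show ?thesis .
qed

lemma integral_v_monomial:
  "(\<integral>\<omega>. (\<Prod>j\<in>{1..k}. v \<omega> j ^ r j * (1 - v \<omega> j) ^ t j) \<partial>M)
     = (\<Sum>P\<in>{P. partition_on {1..k} P}. (\<beta> * \<theta>) ^ card P / pochhammer \<beta> k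
         * (\<Prod>A\<in>P. fact (card A - 1) * fact (\<Sum>i\<in>A. r i)
              / pochhammer (\<theta> + real (\<Sum>i\<in>A. t i)) (1 + (\<Sum>i\<in>A. r i))))"
proof -
  define g where "g A = fact (\<Sum>i\<in>A. r i) / pochhammer (\<theta> + real (\<Sum>i\<in>A. t i)) (Suc (\<Sum>i\<in>A. r i))"
    for A :: "nat set"
  have "AE \<omega> in M. \<forall>j\<in>{1..k}. v \<omega> j \<in> {0..1}"
    by (rule AE_finite_allI) (use AE_v_unit in auto)
  then have "(\<integral>\<omega>. (\<Prod>j\<in>{1..k}. v \<omega> j ^ r j * (1 - v \<omega> j) ^ t j) \<partial>M)
      = (\<integral>\<omega>. (\<Prod>j\<in>{1..k}. indicator {0..1} (v \<omega> j) * v \<omega> j ^ r j * (1 - v \<omega> j) ^ t j) \<partial>M)"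
    using v_measurable by (intro integral_cong_AE) (auto intro!: prod.cong)
  also have "\<dots> = enn2real (\<integral>\<^sup>+\<omega>. ennreal (\<Prod>j\<in>{1..k}. indicator {0..1} (v \<omega> j) * v \<omega> j ^ r j * (1 - v \<omega> j) ^ t j) \<partial>M)"
    using v_measurable by (intro integral_eq_nn_integral) (auto intro!: prod_nonneg simp: indicator_def)
  also have "\<dots> = (\<Sum>P | partition_on {1..k} P. ewens_weight \<beta> {1..k} P * (\<Prod>A\<in>P. \<theta> * g A))"
    unfolding nn_integral_v_monomial g_def times_divide_eq_right using theta_pos ewens_weight_nonneg[OF beta_pos]
    by (intro enn2real_ennreal sum_nonneg mult_nonneg_nonneg prod_nonneg divide_nonneg_nonneg
        less_imp_le[OF pochhammer_pos] add_pos_nonneg) (auto intro: sum_nonneg)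
  also have "\<dots> = (\<Sum>P | partition_on {1..k} P. (\<beta> * \<theta>) ^ card P / pochhammer \<beta> k * (\<Prod>A\<in>P. fact (card A - 1) * g A))"
    by (intro sum.cong refl) (simp add: ewens_weight_mult_prod)
  finally show ?thesis
    by (simp add: g_def)
qed

end

section \<open>Allocation probabilities\<close>

lemma prod_dsb_weight:
  fixes w :: "nat \<Rightarrow> real" and dd :: "'l \<Rightarrow> nat"
  assumes L: "finite L" and dd: "\<And>l. l \<in> L \<Longrightarrow> 1 \<le> dd l \<and> dd l \<le> k"
  shows "(\<Prod>l\<in>L. dsb_weight w (dd l))
       = (\<Prod>j\<in>{1..k}. w j ^ card {l\<in>L. dd l = j} * (1 - w j) ^ card {l\<in>L. dd l > j})"
proof -
  have "(\<Prod>l\<in>L. dsb_weight w (dd l)) = (\<Prod>l\<in>L. w (dd l) * (\<Prod>i\<in>{1..<dd l}. (1 - w i)))"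
    using dd by (intro prod.cong refl) (force simp: dsb_weight_def)
  also have "\<dots> = (\<Prod>l\<in>L. w (dd l)) * (\<Prod>l\<in>L. \<Prod>i\<in>{1..<dd l}. (1 - w i))"
    by (rule prod.distrib)
  also have "(\<Prod>l\<in>L. w (dd l)) = (\<Prod>j\<in>{1..k}. w j ^ card {l\<in>L. dd l = j})"
    by (rule prod_comp_eq_prod_power_card) (use L dd in auto)
  also have "(\<Prod>l\<in>L. \<Prod>i\<in>{1..<dd l}. (1 - w i)) = (\<Prod>l\<in>L. \<Prod>i\<in>{1..k}. (if i < dd l then 1 - w i else 1))"
  proof (rule prod.cong[OF refl])
    fix l assume l: "l \<in> L"
    have "{i\<in>{1..k}. i < dd l} = {1..<dd l}" using dd[OF l] by auto
    hence "(\<Prod>i\<in>{1..<dd l}. (1 - w i)) = (\<Prod>i\<in>{i\<in>{1..k}. i < dd l}. (1 - w i))" by simp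
    also have "\<dots> = (\<Prod>i\<in>{1..k}. (if i < dd l then 1 - w i else 1))" by (rule prod.inter_filter) simp
    finally show "(\<Prod>i\<in>{1..<dd l}. (1 - w i)) = (\<Prod>i\<in>{1..k}. (if i < dd l then 1 - w i else 1))" .
  qed
  also have "\<dots> = (\<Prod>i\<in>{1..k}. \<Prod>l\<in>L. (if i < dd l then 1 - w i else 1))"
    by (rule prod.swap)
  also have "\<dots> = (\<Prod>i\<in>{1..k}. (1 - w i) ^ card {l\<in>L. dd l > i})"
  proof (rule prod.cong[OF refl])
    fix i
    have "(\<Prod>l\<in>L. (if i < dd l then 1 - w i else 1)) = (\<Prod>l\<in>{l\<in>L. i < dd l}. 1 - w i)"
      by (rule prod.inter_filter[symmetric]) (simp add: L)
    also have "\<dots> = (1 - w i) ^ card {l\<in>L. dd l > i}" by simp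
    finally show "(\<Prod>l\<in>L. (if i < dd l then 1 - w i else 1)) = (1 - w i) ^ card {l\<in>L. dd l > i}" .
  qed
  finally show ?thesis by (simp add: prod.distrib)
qed

theorem corollary6:
  fixes M :: "'w measure"
    and \<nu> :: "'w \<Rightarrow> real measure"
    and v :: "'w \<Rightarrow> nat \<Rightarrow> real"
    and d :: "'w \<Rightarrow> nat \<Rightarrow> nat"
    and \<beta> \<theta> :: real
    and n :: nat and dd :: "nat \<Rightarrow> nat"
  assumes "prob_space M"
    and "\<beta> > 0" and "\<theta> > 0"
    and DP: "dirichlet_process M \<nu> \<beta> (beta_one \<theta>)"
    and v_meas: "\<And>i. (\<lambda>\<omega>. v \<omega> i) \<in> borel_measurable M"
    and v_ciid: "\<And>A N B. A \<in> sets (prob_algebra borel) \<Longrightarrow> (\<And>i. B i \<in> sets borel) \<Longrightarrow>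
        measure M {\<omega> \<in> space M. \<nu> \<omega> \<in> A \<and> (\<forall>i\<in>{1..N}. v \<omega> i \<in> B i)}
          = (\<integral>\<omega>. indicator A (\<nu> \<omega>) * (\<Prod>i\<in>{1..N}. measure (\<nu> \<omega>) (B i)) \<partial>M)"
    and d_meas: "\<And>l. (\<lambda>\<omega>. d \<omega> l) \<in> measurable M (count_space UNIV)"
    and d_ciid: "\<And>C N js. C \<in> sets (Pi\<^sub>M UNIV (\<lambda>_::nat. borel :: real measure)) \<Longrightarrow>
        measure M {\<omega> \<in> space M. (\<lambda>j. dsb_weight (v \<omega>) j) \<in> C \<and> (\<forall>l\<in>{1..N}. d \<omega> l = js l)}
          = (\<integral>\<omega>. indicator C (\<lambda>j. dsb_weight (v \<omega>) j)
                   * (\<Prod>l\<in>{1..N}. dsb_weight (v \<omega>) (js l)) \<partial>M)"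
    and "n \<ge> 1"
    and dd_pos: "\<And>l. l \<in> {1..n} \<Longrightarrow> dd l \<ge> 1"
  shows "measure M {\<omega> \<in> space M. \<forall>l\<in>{1..n}. d \<omega> l = dd l}
    = (let k = Max (dd ` {1..n});
           r = (\<lambda>i. card {l\<in>{1..n}. dd l = i});
           t = (\<lambda>i. card {l\<in>{1..n}. dd l > i})
       in \<Sum>P\<in>{P. partition_on {1..k} P}.
            (\<beta> * \<theta>) ^ card P / pochhammer \<beta> k
            * (\<Prod>A\<in>P. fact (card A - 1) * fact (\<Sum>i\<in>A. r i)
                 / pochhammer (\<theta> + real (\<Sum>i\<in>A. t i)) (1 + (\<Sum>i\<in>A. r i))))"
proof -
  have "dirichlet_stick_breaking M \<nu> \<beta> \<theta> v"
    by (intro dirichlet_stick_breaking.intro dirichlet_process_beta.intro dirichlet_process_beta_axioms.intro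
        dirichlet_stick_breaking_axioms.intro assms(1-3) DP v_meas v_ciid)
  then interpret dirichlet_stick_breaking M \<nu> \<beta> \<theta> v .
  define k where "k = Max (dd ` {1..n})"
  define r where "r i = card {l\<in>{1..n}. dd l = i}" for i
  define t where "t i = card {l\<in>{1..n}. dd l > i}" for i
  have dd_range: "1 \<le> dd l \<and> dd l \<le> k" if "l \<in> {1..n}" for l
    using dd_pos[OF that] that by (auto simp: k_def intro: Max_ge)
  have "UNIV \<in> sets (Pi\<^sub>M UNIV (\<lambda>_::nat. borel :: real measure))"
    using sets.top[of "Pi\<^sub>M UNIV (\<lambda>_::nat. borel :: real measure)"] by (simp add: space_PiM)
  then have "measure M {\<omega> \<in> space M. \<forall>l\<in>{1..n}. d \<omega> l = dd l}
      = (\<integral>\<omega>. (\<Prod>l\<in>{1..n}. dsb_weight (v \<omega>) (dd l)) \<partial>M)"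
    using d_ciid[of UNIV n dd] by simp
  also have "\<dots> = (\<integral>\<omega>. (\<Prod>j\<in>{1..k}. v \<omega> j ^ r j * (1 - v \<omega> j) ^ t j) \<partial>M)"
    using prod_dsb_weight[of "{1..n}" dd k] dd_range unfolding r_def t_def
    by (intro Bochner_Integration.integral_cong) simp_all
  finally show ?thesis
    using integral_v_monomial[where k=k and r=r and t=t]
    unfolding Let_def k_def[symmetric] r_def[symmetric] t_def[symmetric] by (rule trans)
qed

end
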